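(* In the setting described in the context, suppose that the closed-loop system $\Sigma_0$ is UGES. Then there exists $\delta^\star>0$ such that the sampled-data system $\Sigma$ is UGES whenever the maximal sampling time $\delta=\sup_{k\ge0}(s_{k+1}-s_k)$ of the sampling sequence is smaller than $\delta^\star$.
   Context: $X,U$ are Banach spaces. $A$ is the infinitesimal generator of a $C_0$-group $(T_t)_{t\in\mathbb{R}}$ of bounded linear operators on $X$. $\mathcal{Q}$ is a nonempty set, $\mathrm{PC}$ the set of piecewise constant $\sigma:\mathbb{R}_+\to\mathcal{Q}$. For $q\in\mathcal{Q}$, $f_q:X\times U\to X$ is Lipschitz with constant $L_f>0$ independent of $q$ and $f_q(0,0)=0$; $K:X\to U$ is globally Lipschitz with $K(0)=0$. Closed-loop system $\Sigma_0$: for $q\in\mathcal{Q}$, $T_q(t)x_0$ is the mild solution $x(t)=T_tx_0+\int_0^tT_{t-s}f_q(x(s),K(x(s)))ds$, and for $\sigma\in\mathrm{PC}$ equal to $q_k$ on $[t_k,t_{k+1})$ ($0=t_0<t_1<\cdots\to\infty$), $\phi^{\Sigma_0}(t,x_0,\sigma)=T_{q_k}(t-t_k)\cdots T_{q_0}(t_1)x_0$ for $t\in[t_k,t_{k+1})$. Sampled-data system $\Sigma$: given sampling instants $s_0=0<s_1<\cdots$ with $s_k\to\infty$, $\phi^\Sigma(t,x_0,\sigma)=x^\Sigma(t)$, where $x^\Sigma$ is the unique continuous function with $x^\Sigma(0)=x_0$ and, for $k\ge0$, $s_k\le t<s_{k+1}$, $x^\Sigma(t)=T_{t-s_k}x^\Sigma(s_k)+\int_0^{t-s_k}T_{t-s_k-s}f_{\sigma(s+s_k)}(x^\Sigma(s+s_k),K(T_sx^\Sigma(s_k)))ds$.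 A system with transition map $\phi$ is UGES if there exist $M,\lambda>0$ with $\|\phi(t,x,\sigma)\|\le Me^{-\lambda t}\|x\|$ for all $t\ge0$, $x\in X$, $\sigma\in\mathrm{PC}$. *)

theory Defs
  imports "HOL-Analysis.Analysis"
begin

text \<open>C0-group of bounded linear operators on a Banach space (its generator A is
  determined by T and plays no further role in the statement).\<close>
definition C0_group :: "(real \<Rightarrow> 'x::banach \<Rightarrow> 'x) \<Rightarrow> bool" where
  "C0_group T \<longleftrightarrow> (\<forall>t. bounded_linear (T t)) \<and> T 0 = id \<and>
     (\<forall>s t. T (s + t) = T s \<circ> T t) \<and> (\<forall>x. ((\<lambda>t. T t x) \<longlongrightarrow> x) (at 0))"

definition switching_seq :: "(real \<Rightarrow> 'q) \<Rightarrow> (nat \<Rightarrow> real) \<Rightarrow> bool" where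
  "switching_seq \<sigma> ts \<longleftrightarrow> ts 0 = 0 \<and> strict_mono ts \<and> filterlim ts at_top sequentially \<and>
     (\<forall>k. \<forall>t\<in>{ts k..<ts (Suc k)}. \<sigma> t = \<sigma> (ts k))"

definition PC :: "(real \<Rightarrow> 'q) set" where
  "PC = {\<sigma>. \<exists>ts. switching_seq \<sigma> ts}"

definition sampling_seq :: "(nat \<Rightarrow> real) \<Rightarrow> bool" where
  "sampling_seq s \<longleftrightarrow> s 0 = 0 \<and> strict_mono s \<and> filterlim s at_top sequentially"

definition mild_sol ::
  "(real \<Rightarrow> 'x::banach \<Rightarrow> 'x) \<Rightarrow> ('q \<Rightarrow> 'x \<times> 'u::banach \<Rightarrow> 'x) \<Rightarrow> ('x \<Rightarrow> 'u)
     \<Rightarrow> 'q \<Rightarrow> 'x \<Rightarrow> (real \<Rightarrow> 'x) \<Rightarrow> bool" where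
  "mild_sol T f K q x0 x \<longleftrightarrow> continuous_on {0..} x \<and>
     (\<forall>t\<ge>0. x t = T t x0 + integral {0..t} (\<lambda>r. T (t - r) (f q (x r, K (x r)))))"

definition Tq ::
  "(real \<Rightarrow> 'x::banach \<Rightarrow> 'x) \<Rightarrow> ('q \<Rightarrow> 'x \<times> 'u::banach \<Rightarrow> 'x) \<Rightarrow> ('x \<Rightarrow> 'u)
     \<Rightarrow> 'q \<Rightarrow> real \<Rightarrow> 'x \<Rightarrow> 'x" where
  "Tq T f K q t x0 = (THE x. mild_sol T f K q x0 x \<and> (\<forall>r<0. x r = 0)) t"

fun sw_state ::
  "(real \<Rightarrow> 'x::banach \<Rightarrow> 'x) \<Rightarrow> ('q \<Rightarrow> 'x \<times> 'u::banach \<Rightarrow> 'x) \<Rightarrow> ('x \<Rightarrow> 'u)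
     \<Rightarrow> (real \<Rightarrow> 'q) \<Rightarrow> (nat \<Rightarrow> real) \<Rightarrow> 'x \<Rightarrow> nat \<Rightarrow> 'x" where
  "sw_state T f K \<sigma> ts x0 0 = x0"
| "sw_state T f K \<sigma> ts x0 (Suc k) =
     Tq T f K (\<sigma> (ts k)) (ts (Suc k) - ts k) (sw_state T f K \<sigma> ts x0 k)"

text \<open>Transition map of \<Sigma>0: T_{q_k}(t - t_k) ... T_{q_0}(t_1) x0 for t \<in> [t_k, t_{k+1}).\<close>
definition phi0 ::
  "(real \<Rightarrow> 'x::banach \<Rightarrow> 'x) \<Rightarrow> ('q \<Rightarrow> 'x \<times> 'u::banach \<Rightarrow> 'x) \<Rightarrow> ('x \<Rightarrow> 'u)
     \<Rightarrow> real \<Rightarrow> 'x \<Rightarrow> (real \<Rightarrow> 'q) \<Rightarrow> 'x" where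
  "phi0 T f K t x0 \<sigma> =
     (let ts = (SOME ts. switching_seq \<sigma> ts);
          k = (THE k. ts k \<le> t \<and> t < ts (Suc k))
      in Tq T f K (\<sigma> (ts k)) (t - ts k) (sw_state T f K \<sigma> ts x0 k))"

definition sd_sol ::
  "(real \<Rightarrow> 'x::banach \<Rightarrow> 'x) \<Rightarrow> ('q \<Rightarrow> 'x \<times> 'u::banach \<Rightarrow> 'x) \<Rightarrow> ('x \<Rightarrow> 'u)
     \<Rightarrow> (nat \<Rightarrow> real) \<Rightarrow> 'x \<Rightarrow> (real \<Rightarrow> 'q) \<Rightarrow> (real \<Rightarrow> 'x) \<Rightarrow> bool" where
  "sd_sol T f K s x0 \<sigma> x \<longleftrightarrow> continuous_on {0..} x \<and> x 0 = x0 \<and>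
     (\<forall>k. \<forall>t\<in>{s k..<s (Suc k)}.
        x t = T (t - s k) (x (s k)) +
              integral {0..t - s k}
                (\<lambda>r. T (t - s k - r) (f (\<sigma> (r + s k)) (x (r + s k), K (T r (x (s k)))))))"

definition phiS ::
  "(real \<Rightarrow> 'x::banach \<Rightarrow> 'x) \<Rightarrow> ('q \<Rightarrow> 'x \<times> 'u::banach \<Rightarrow> 'x) \<Rightarrow> ('x \<Rightarrow> 'u)
     \<Rightarrow> (nat \<Rightarrow> real) \<Rightarrow> real \<Rightarrow> 'x \<Rightarrow> (real \<Rightarrow> 'q) \<Rightarrow> 'x" where
  "phiS T f K s t x0 \<sigma> = (THE x. sd_sol T f K s x0 \<sigma> x \<and> (\<forall>r<0. x r = 0)) t"

definition UGES :: "(real \<Rightarrow> 'x::real_normed_vector \<Rightarrow> (real \<Rightarrow> 'q) \<Rightarrow> 'x) \<Rightarrow> bool" where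
  "UGES \<phi> \<longleftrightarrow> (\<exists>M lam. M > 0 \<and> lam > 0 \<and>
     (\<forall>t\<ge>0. \<forall>x. \<forall>\<sigma>\<in>PC. norm (\<phi> t x \<sigma>) \<le> M * exp (- lam * t) * norm x))"

end

theory Submission
  imports Defs
begin

text \<open>Choose \<open>\<tau>\<close> such that the closed loop \<open>\<Sigma>\<^sub>0\<close> contracts by \<open>1/4\<close> over time \<open>\<tau>\<close>. On a window
  of length between \<open>\<tau>\<close> and \<open>\<tau> + 1\<close> that starts at a sampling instant, compare the sampled-data
  trajectory with the trajectory of \<open>\<Sigma>\<^sub>0\<close> started from the same state. Both satisfy Duhamel's
  formula; the sampled input \<open>K (T\<^bsub>r - s\<^sub>k\<^esub> x(s\<^sub>k))\<close> differs from \<open>K (x r)\<close> by \<open>O(\<delta>)\<close> times the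
  size of the state, and Gronwall's inequality turns this into a deviation of \<open>O(\<delta>)\<close> times the
  initial state. For small \<open>\<delta>\<close> the sampled-data state therefore at least halves over each
  window while growing at most by the factor \<open>2 M\<close> inside it, which gives exponential decay
  with rate \<open>ln 2 / (\<tau> + 1)\<close>.

  Both transition maps are defined through mild solutions, whose existence and uniqueness come
  from Picard iteration and Gronwall's inequality; the constants are uniform because the group
  is bounded on compact time intervals by the uniform boundedness principle.\<close>

section \<open>Uniform boundedness and \<open>C\<^sub>0\<close>-groups\<close>

lemma norm_bound_from_ball:
  fixes L :: "'a::real_normed_vector \<Rightarrow> 'b::real_normed_vector"
  assumes L: "linear L" and r: "r > 0" and ball: "\<And>v. v \<in> ball v0 r \<Longrightarrow> norm (L v) \<le> B"
  shows "norm (L w) \<le> 4 * B / r * norm w"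
proof (cases "w = 0")
  case True
  then show ?thesis using L by (simp add: linear_0)
next
  case False
  define w' where "w' = (r / 2 / norm w) *\<^sub>R w"
  have "norm w' = r / 2" using False r by (simp add: w'_def)
  then have "norm (L (v0 + w')) \<le> B" and "norm (L v0) \<le> B"
    using r by (auto intro: ball simp: dist_norm)
  then have "norm (L w') \<le> 2 * B"
    using norm_triangle_ineq4[of "L (v0 + w')" "L v0"] by (simp add: linear_add[OF L])
  then have "r / 2 / norm w * norm (L w) \<le> 2 * B"
    using r by (simp add: w'_def linear_scale[OF L])
  then show ?thesis using r False by (simp add: field_simps)
qed

lemma closed_cover_contains_ball:
  fixes E :: "nat \<Rightarrow> 'a::complete_space set"
  assumes closed: "\<And>n. closed (E n)" and cover: "(\<Union>n. E n) = UNIV"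
  obtains n v r where "r > 0" "ball v r \<subseteq> E n"
proof -
  have "\<exists>n. interior (E n) \<noteq> {}"
  proof (rule ccontr)
    assume "\<nexists>n. interior (E n) \<noteq> {}"
    then have "euclidean interior_of \<Union>(range E) = {}"
      by (intro Baire_category_alt)
        (auto simp: completely_metrizable_space_euclidean closed closed_closedin[symmetric])
    then show False using cover by simp
  qed
  then obtain n v where "v \<in> interior (E n)" by auto
  then show ?thesis
    by (meson open_contains_ball open_interior interior_subset subset_trans that)
qed

lemma uniform_boundedness:
  fixes L :: "'i \<Rightarrow> 'a::banach \<Rightarrow> 'b::real_normed_vector"
  assumes lin: "\<And>i. i \<in> I \<Longrightarrow> bounded_linear (L i)"
    and pointwise: "\<And>v. \<exists>B. \<forall>i\<in>I. norm (L i v) \<le> B"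
  shows "\<exists>C\<ge>1. \<forall>i\<in>I. \<forall>v. norm (L i v) \<le> C * norm v"
proof -
  define E where "E n = {v. \<forall>i\<in>I. norm (L i v) \<le> real n}" for n :: nat
  have closed: "closed (E n)" for n
  proof -
    have "E n = (\<Inter>i\<in>I. {v. norm (L i v) \<le> real n})" by (auto simp: E_def)
    moreover have "closed {v. norm (L i v) \<le> real n}" if "i \<in> I" for i
      by (intro closed_Collect_le continuous_on_norm continuous_on_id continuous_on_const
          bounded_linear.continuous_on[OF lin[OF that]])
    ultimately show ?thesis by auto
  qed
  have cover: "(\<Union>n. E n) = UNIV"
  proof -
    have "v \<in> (\<Union>n. E n)" for v
    proof -
      obtain B where "\<forall>i\<in>I. norm (L i v) \<le> B" using pointwise by blast
      then have "v \<in> E (nat \<lceil>B\<rceil>)"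
        unfolding E_def using order_trans[OF _ real_nat_ceiling_ge[of B]] by blast
      then show ?thesis by blast
    qed
    then show ?thesis by blast
  qed
  obtain n v0 r where r: "r > 0" "ball v0 r \<subseteq> E n"
    by (rule closed_cover_contains_ball[OF closed cover]) blast
  have "norm (L i w) \<le> (4 * real n / r + 1) * norm w" if i: "i \<in> I" for i w
  proof -
    have "norm (L i v) \<le> real n" if "v \<in> ball v0 r" for v
      using r(2) that i unfolding E_def by blast
    then have "norm (L i w) \<le> 4 * real n / r * norm w"
      by (intro norm_bound_from_ball[OF bounded_linear.linear[OF lin[OF i]] r(1)])
    also have "\<dots> \<le> (4 * real n / r + 1) * norm w" by (simp add: distrib_right)
    finally show ?thesis .
  qed
  moreover have "4 * real n / r + 1 \<ge> 1" using r by simp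
  ultimately show ?thesis by blast
qed

locale c0_group =
  fixes T :: "real \<Rightarrow> 'x::banach \<Rightarrow> 'x"
  assumes C0_group: "C0_group T"
begin

lemma bounded_linear_T: "bounded_linear (T t)"
  using C0_group by (simp add: C0_group_def)

lemma T_zero_time [simp]: "T 0 v = v"
  using C0_group by (simp add: C0_group_def)

lemma T_add_time: "T (s + t) v = T s (T t v)"
  using C0_group by (simp add: C0_group_def)

lemma T_diff_time: "T (t - r) v = T t (T (- r) v)"
  using T_add_time[of t "- r"] by simp

lemmas linear_T = bounded_linear.linear[OF bounded_linear_T]
lemmas T_add = linear_add[OF linear_T]
lemmas T_diff = linear_diff[OF linear_T]
lemmas T_0 [simp] = linear_0[OF linear_T]

lemma isCont_T_orbit: "isCont (\<lambda>t. T t v) t"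
proof -
  have "((\<lambda>h. T h v) \<longlongrightarrow> v) (at 0)"
    using C0_group by (simp add: C0_group_def)
  then have "((\<lambda>h. T t (T h v)) \<longlongrightarrow> T t v) (at 0)"
    by (rule bounded_linear.tendsto[OF bounded_linear_T])
  then show ?thesis by (simp add: isCont_iff T_add_time)
qed

lemma continuous_on_T_orbit: "continuous_on S (\<lambda>t. T t v)"
  by (simp add: isCont_T_orbit continuous_at_imp_continuous_on)

lemma T_bounded_on_interval: "\<exists>C\<ge>1. \<forall>t\<in>{a..b}. \<forall>v. norm (T t v) \<le> C * norm v"
proof (rule uniform_boundedness[OF bounded_linear_T])
  fix v
  have "compact ((\<lambda>t. T t v) ` {a..b})"
    by (intro compact_continuous_image continuous_on_T_orbit compact_Icc)
  then show "\<exists>B. \<forall>t\<in>{a..b}. norm (T t v) \<le> B"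
    by (meson bounded_iff compact_imp_bounded image_eqI)
qed

lemma continuous_on_T [continuous_intros]:
  assumes "continuous_on S a" "continuous_on S b"
  shows "continuous_on S (\<lambda>r. T (a r) (b r))"
  unfolding continuous_on_def
proof
  fix r0 assume r0: "r0 \<in> S"
  obtain C where C: "\<forall>t\<in>{a r0 - 1..a r0 + 1}. \<forall>v. norm (T t v) \<le> C * norm v"
    using T_bounded_on_interval by blast
  have a: "(a \<longlongrightarrow> a r0) (at r0 within S)" and b: "(b \<longlongrightarrow> b r0) (at r0 within S)"
    using assms r0 by (auto simp: continuous_on_def)
  have "\<forall>\<^sub>F r in at r0 within S. norm (T (a r) (b r) - T (a r0) (b r0)) \<le>
        C * norm (b r - b r0) + norm (T (a r) (b r0) - T (a r0) (b r0))"
    using tendstoD[OF a zero_less_one]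
  proof eventually_elim
    case (elim r)
    then have "a r \<in> {a r0 - 1..a r0 + 1}" by (auto simp: dist_real_def)
    then have "norm (T (a r) (b r - b r0)) \<le> C * norm (b r - b r0)" using C by blast
    then show ?case
      using norm_triangle_ineq[of "T (a r) (b r - b r0)" "T (a r) (b r0) - T (a r0) (b r0)"]
      by (simp add: T_diff)
  qed
  moreover have "((\<lambda>r. C * norm (b r - b r0) + norm (T (a r) (b r0) - T (a r0) (b r0))) \<longlongrightarrow> 0)
      (at r0 within S)"
    using tendsto_add[OF tendsto_mult_left[OF tendsto_norm[OF b[THEN LIM_zero]], of C]
        tendsto_norm[OF isCont_tendsto_compose[OF isCont_T_orbit a, THEN LIM_zero]]]
    by simp
  ultimately have "((\<lambda>r. T (a r) (b r) - T (a r0) (b r0)) \<longlongrightarrow> 0) (at r0 within S)"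
    by (rule Lim_null_comparison)
  then show "((\<lambda>r. T (a r) (b r)) \<longlongrightarrow> T (a r0) (b r0)) (at r0 within S)"
    by (rule LIM_zero_cancel)
qed

end

section \<open>Gronwall's inequality and Duhamel's formula\<close>

lemma gronwall:
  fixes \<phi> :: "real \<Rightarrow> real"
  assumes cont: "continuous_on {a..b} \<phi>" and A: "A \<ge> 0"
    and le: "\<And>t. t \<in> {a..b} \<Longrightarrow> \<phi> t \<le> \<alpha> + A * integral {a..t} \<phi>"
    and t: "t \<in> {a..b}"
  shows "\<phi> t \<le> \<alpha> * exp (A * (t - a))"
proof -
  define \<Psi> where "\<Psi> s = integral {a..s} \<phi>" for s
  define \<Theta> where "\<Theta> s = exp (- A * (s - a)) * (\<alpha> + A * \<Psi> s)" for s
  have \<Psi>: "continuous_on {a..b} \<Psi>"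
    unfolding \<Psi>_def by (intro indefinite_integral_continuous_1 integrable_continuous_real cont)
  have "continuous_on {a..t} \<Theta>"
    unfolding \<Theta>_def using t by (intro continuous_intros continuous_on_subset[OF \<Psi>]) auto
  moreover have "\<exists>y. (\<Theta> has_real_derivative y) (at s) \<and> y \<le> 0" if s: "a < s" "s < t" for s
  proof -
    have "(\<Psi> has_real_derivative \<phi> s) (at s)"
      using integral_has_real_derivative[OF cont, of s] s t
      by (simp add: \<Psi>_def[abs_def] at_within_Icc_at)
    then have "(\<Theta> has_real_derivative
        exp (- A * (s - a)) * (A * (\<phi> s - (\<alpha> + A * \<Psi> s)))) (at s)"
      unfolding \<Theta>_def by (auto intro!: derivative_eq_intros simp: algebra_simps)
    moreover have "A * (\<phi> s - (\<alpha> + A * \<Psi> s)) \<le> 0"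
      using le[of s] s t A by (simp add: \<Psi>_def mult_nonneg_nonpos)
    ultimately show ?thesis by (meson exp_gt_zero less_imp_le mult_nonneg_nonpos)
  qed
  ultimately have "\<Theta> t \<le> \<Theta> a"
    using DERIV_nonpos_imp_decreasing_open[of a t \<Theta>] t by fastforce
  then have "exp (- A * (t - a)) * (\<alpha> + A * \<Psi> t) \<le> \<alpha>"
    by (simp add: \<Theta>_def \<Psi>_def)
  then have "exp (A * (t - a)) * (exp (- A * (t - a)) * (\<alpha> + A * \<Psi> t)) \<le> exp (A * (t - a)) * \<alpha>"
    by (intro mult_left_mono) auto
  moreover have e: "exp (A * (t - a)) * exp (- A * (t - a)) = 1"
    by (simp add: exp_add[symmetric])
  ultimately have "\<alpha> + A * \<Psi> t \<le> exp (A * (t - a)) * \<alpha>"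
    by (simp only: mult.assoc[symmetric] e mult_1_left)
  then show ?thesis using le[OF t] unfolding \<Psi>_def by (metis mult.commute order_trans)
qed

lemma integral_affine_real:
  fixes \<phi> :: "real \<Rightarrow> real"
  assumes "\<phi> integrable_on {a..s}" "a \<le> s"
  shows "integral {a..s} (\<lambda>r. c * \<phi> r + d) = c * integral {a..s} \<phi> + d * (s - a)"
proof -
  have "integral {a..s} (\<lambda>r. c * \<phi> r + d) = integral {a..s} (\<lambda>r. c * \<phi> r) + integral {a..s} (\<lambda>r. d)"
    using assms(1) by (intro integral_add integrable_on_mult_right) auto
  moreover have "integral {a..s} (\<lambda>r. c * \<phi> r) = c * integral {a..s} \<phi>"
    by (rule integral_mult_right)
  moreover have "integral {a..s} (\<lambda>r. d) = d * (s - a)" using assms(2) by simp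
  ultimately show ?thesis by (simp only:)
qed

text \<open>The integrability condition is put on \<open>r \<mapsto> T (- r) (F r)\<close>: since
  \<open>T (t - r) = T t \<circ> T (- r)\<close>, it yields integrability of every convolution integrand.\<close>

definition duhamel ::
  "(real \<Rightarrow> 'x::banach \<Rightarrow> 'x) \<Rightarrow> (real \<Rightarrow> 'x) \<Rightarrow> real \<Rightarrow> real \<Rightarrow> (real \<Rightarrow> 'x) \<Rightarrow> bool" where
  "duhamel T F a b x \<longleftrightarrow> (\<lambda>r. T (- r) (F r)) integrable_on {a..b} \<and>
     (\<forall>t\<in>{a..b}. x t = T (t - a) (x a) + integral {a..t} (\<lambda>r. T (t - r) (F r)))"

context c0_group
begin

lemma
  assumes "(\<lambda>r. T (- r) (F r)) integrable_on S"
  shows integrable_T_convolution: "(\<lambda>r. T (t - r) (F r)) integrable_on S"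
    and integral_T_convolution:
      "integral S (\<lambda>r. T (t - r) (F r)) = T t (integral S (\<lambda>r. T (- r) (F r)))"
proof -
  have eq: "(\<lambda>r. T (t - r) (F r)) = T t \<circ> (\<lambda>r. T (- r) (F r))"
    by (auto simp: T_diff_time)
  show "(\<lambda>r. T (t - r) (F r)) integrable_on S"
    unfolding eq by (rule integrable_linear[OF assms bounded_linear_T])
  show "integral S (\<lambda>r. T (t - r) (F r)) = T t (integral S (\<lambda>r. T (- r) (F r)))"
    unfolding eq by (rule integral_linear[OF assms bounded_linear_T])
qed

lemma norm_integral_T_convolution_le:
  assumes "(\<lambda>r. T (- r) (H r)) integrable_on {a..t}" and "g integrable_on {a..t}"
    and "\<And>r. r \<in> {a..t} \<Longrightarrow> norm (H r) \<le> g r"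
    and "C \<ge> 0" and "\<And>s v. s \<in> {0..t - a} \<Longrightarrow> norm (T s v) \<le> C * norm v"
  shows "norm (integral {a..t} (\<lambda>r. T (t - r) (H r))) \<le> C * integral {a..t} g"
proof -
  have "norm (integral {a..t} (\<lambda>r. T (t - r) (H r))) \<le> integral {a..t} (\<lambda>r. C * g r)"
  proof (rule integral_norm_bound_integral)
    fix r assume r: "r \<in> {a..t}"
    then have "norm (T (t - r) (H r)) \<le> C * norm (H r)" using assms(5)[of "t - r"] by auto
    also have "\<dots> \<le> C * g r" using assms(3)[OF r] assms(4) by (rule mult_left_mono)
    finally show "norm (T (t - r) (H r)) \<le> C * g r" .
  qed (use assms integrable_T_convolution integrable_on_mult_right in auto)
  then show ?thesis by simp
qed

lemma duhamelD:
  "duhamel T F a b x \<Longrightarrow> t \<in> {a..b} \<Longrightarrow>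
    x t = T (t - a) (x a) + integral {a..t} (\<lambda>r. T (t - r) (F r))"
  unfolding duhamel_def by blast

lemma duhamel_integrable:
  "duhamel T F a b x \<Longrightarrow> {c..d} \<subseteq> {a..b} \<Longrightarrow> (\<lambda>r. T (- r) (F r)) integrable_on {c..d}"
  unfolding duhamel_def using integrable_subinterval_real by blast

lemma duhamel_factored:
  assumes "duhamel T F a b x" "t \<in> {a..b}"
  shows "x t = T (t - a) (x a) + T t (integral {a..t} (\<lambda>r. T (- r) (F r)))"
proof -
  have "(\<lambda>r. T (- r) (F r)) integrable_on {a..t}"
    using duhamel_integrable[OF assms(1)] assms(2) by auto
  then show ?thesis
    using duhamelD[OF assms] by (simp only: integral_T_convolution)
qed

lemma continuous_on_duhamel:
  assumes "duhamel T F a b x"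
  shows "continuous_on {a..b} x"
proof -
  have "(\<lambda>r. T (- r) (F r)) integrable_on {a..b}" using assms by (simp add: duhamel_def)
  then have "continuous_on {a..b} (\<lambda>t. T (t - a) (x a) + T t (integral {a..t} (\<lambda>r. T (- r) (F r))))"
    by (intro continuous_intros continuous_on_T_orbit indefinite_integral_continuous_1)
  then show ?thesis
    by (rule continuous_on_eq) (rule duhamel_factored[OF assms, symmetric])
qed

lemma duhamel_singleton: "duhamel T F a a x"
  using integrable_on_refl[of "\<lambda>r. T (- r) (F r)" a] by (simp add: duhamel_def cbox_interval)

lemma duhamel_restart:
  assumes x: "duhamel T F a b x" and c: "a \<le> c" "c \<le> t" "t \<le> b"
  shows "x t = T (t - c) (x c) + integral {c..t} (\<lambda>r. T (t - r) (F r))"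
proof -
  let ?G = "\<lambda>r. T (- r) (F r)"
  have "integral {a..t} ?G = integral {a..c} ?G + integral {c..t} ?G"
    using duhamel_integrable[OF x, of a t] c
    by (intro Henstock_Kurzweil_Integration.integral_combine[symmetric]) auto
  moreover have "T (t - c) (x c) = T (t - a) (x a) + T t (integral {a..c} ?G)"
    using duhamel_factored[OF x, of c] c by (simp add: T_add T_add_time[symmetric])
  ultimately have "x t = T (t - c) (x c) + T t (integral {c..t} ?G)"
    using duhamel_factored[OF x, of t] c by (simp add: T_add add.assoc)
  then show ?thesis
    using duhamel_integrable[OF x, of c t] c by (simp add: integral_T_convolution)
qed

lemma duhamel_subinterval:
  assumes "duhamel T F a b x" "a \<le> c" "d \<le> b"
  shows "duhamel T F c d x"
  unfolding duhamel_def
proof (intro conjI ballI)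
  show "(\<lambda>r. T (- r) (F r)) integrable_on {c..d}"
    using duhamel_integrable[OF assms(1)] assms by auto
  show "x t = T (t - c) (x c) + integral {c..t} (\<lambda>r. T (t - r) (F r))" if "t \<in> {c..d}" for t
    by (rule duhamel_restart[OF assms(1)]) (use assms that in auto)
qed

lemma duhamel_join:
  assumes x1: "duhamel T F a c x" and x2: "duhamel T F c b x" and c: "a \<le> c" "c \<le> b"
  shows "duhamel T F a b x"
  unfolding duhamel_def
proof (intro conjI ballI)
  let ?G = "\<lambda>r. T (- r) (F r)"
  show int: "?G integrable_on {a..b}"
    using Henstock_Kurzweil_Integration.integrable_combine[OF c] x1 x2 by (auto simp: duhamel_def)
  fix t assume t: "t \<in> {a..b}"
  show "x t = T (t - a) (x a) + integral {a..t} (\<lambda>r. T (t - r) (F r))"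
  proof (cases "t \<le> c")
    case True
    then show ?thesis by (intro duhamelD[OF x1]) (use t in auto)
  next
    case False
    have "integral {a..t} ?G = integral {a..c} ?G + integral {c..t} ?G"
      using integrable_subinterval_real[OF int, of a t] t c False
      by (intro Henstock_Kurzweil_Integration.integral_combine[symmetric]) auto
    moreover have "T (t - c) (x c) = T (t - a) (x a) + T t (integral {a..c} ?G)"
      using duhamel_factored[OF x1, of c] c by (simp add: T_add T_add_time[symmetric])
    ultimately have "x t = T (t - a) (x a) + T t (integral {a..t} ?G)"
      using duhamel_factored[OF x2, of t] t False by (simp add: T_add add.assoc)
    then show ?thesis
      using integrable_subinterval_real[OF int, of a t] t by (simp add: integral_T_convolution)
  qed
qed

lemma duhamel_concat:
  assumes "\<And>k. s k \<le> s (Suc k)" and "\<And>k. duhamel T F (s k) (s (Suc k)) x"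
  shows "duhamel T F (s 0) (s n) x"
proof (induction n)
  case 0
  show ?case by (rule duhamel_singleton)
next
  case (Suc n)
  have "s 0 \<le> s n" using assms(1) by (induction n) (auto intro: order_trans)
  then show ?case using duhamel_join[OF Suc assms(2)] assms(1) by blast
qed

lemma duhamel_cong:
  assumes x: "duhamel T F a b x"
    and F: "\<And>r. r \<in> {a..<b} \<Longrightarrow> F r = F' r" and X: "\<And>r. r \<in> {a..b} \<Longrightarrow> x r = x' r"
  shows "duhamel T F' a b x'"
  unfolding duhamel_def
proof (intro conjI ballI)
  have "(\<lambda>r. T (- r) (F r)) integrable_on {a..b}" using x by (simp add: duhamel_def)
  then show "(\<lambda>r. T (- r) (F' r)) integrable_on {a..b}"
    by (rule integrable_spike_finite[of "{b}", rotated 2]) (auto simp: F)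
  fix t assume t: "t \<in> {a..b}"
  have "integral {a..t} (\<lambda>r. T (t - r) (F r)) = integral {a..t} (\<lambda>r. T (t - r) (F' r))"
    by (rule integral_spike[of "{b}"]) (use t in \<open>auto simp: F\<close>)
  have "x' t = x t" using X t by simp
  also have "\<dots> = T (t - a) (x a) + integral {a..t} (\<lambda>r. T (t - r) (F r))" by (rule duhamelD[OF x t])
  finally show "x' t = T (t - a) (x' a) + integral {a..t} (\<lambda>r. T (t - r) (F' r))"
    using X[of a] t \<open>integral {a..t} _ = _\<close> by simp
qed

lemma integral_shift_convolution:
  "integral {0..t - a} (\<lambda>r. T (t - a - r) (F (r + a))) = integral {a..t} (\<lambda>r. T (t - r) (F r))"
  using integral_shift_real_ivl[where a=a and b=t and c=a and f="\<lambda>r. T (t - r) (F r)"]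
  by (simp add: algebra_simps)

lemma duhamel_shift:
  assumes x: "duhamel T F a b x"
  shows "duhamel T (\<lambda>r. F (r - c)) (a + c) (b + c) (\<lambda>t. x (t - c))"
  unfolding duhamel_def
proof (intro conjI ballI)
  have "(\<lambda>r. T (- c) (T (- r) (F r))) integrable_on {a..b}"
    using integrable_linear[OF _ bounded_linear_T] x by (auto simp: duhamel_def o_def)
  from integrable_shift_real_ivl[OF this, of "- c"]
  show "(\<lambda>r. T (- r) (F (r - c))) integrable_on {a + c..b + c}"
    by (simp add: T_add_time[symmetric])
  fix t assume t: "t \<in> {a + c..b + c}"
  then have "x (t - c) = T (t - c - a) (x a) + integral {a..t - c} (\<lambda>r. T (t - c - r) (F r))"
    using duhamelD[OF x, of "t - c"] by simp
  moreover have "integral {a..t - c} (\<lambda>r. T (t - c - r) (F r)) =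
      integral {a + c..t} (\<lambda>r. T (t - r) (F (r - c)))"
    using integral_shift_real_ivl[where a="a + c" and b=t and c=c and f="\<lambda>r. T (t - r) (F (r - c))"]
    by (simp add: algebra_simps)
  ultimately show "x (t - c) = T (t - (a + c)) (x (a + c - c)) +
      integral {a + c..t} (\<lambda>r. T (t - r) (F (r - c)))"
    by (simp add: algebra_simps)
qed

lemma
  assumes "(\<lambda>r. T (- r) (F1 r)) integrable_on S" "(\<lambda>r. T (- r) (F2 r)) integrable_on S"
  shows integrable_T_convolution_diff: "(\<lambda>r. T (- r) (F1 r - F2 r)) integrable_on S"
    and integral_T_convolution_diff:
      "integral S (\<lambda>r. T (t - r) (F1 r)) - integral S (\<lambda>r. T (t - r) (F2 r)) =
       integral S (\<lambda>r. T (t - r) (F1 r - F2 r))"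
  using integrable_diff[OF assms]
    integral_diff[OF integrable_T_convolution[OF assms(1)] integrable_T_convolution[OF assms(2)]]
  by (simp_all add: T_diff)

lemma
  assumes x1: "duhamel T F1 a b x1" and x2: "duhamel T F2 a b x2" and t: "t \<in> {a..b}"
  shows duhamel_diff:
      "x1 t - x2 t = T (t - a) (x1 a - x2 a) + integral {a..t} (\<lambda>r. T (t - r) (F1 r - F2 r))"
    and duhamel_diff_integrable: "(\<lambda>r. T (- r) (F1 r - F2 r)) integrable_on {a..t}"
proof -
  have i1: "(\<lambda>r. T (- r) (F1 r)) integrable_on {a..t}" using duhamel_integrable[OF x1] t by auto
  have i2: "(\<lambda>r. T (- r) (F2 r)) integrable_on {a..t}" using duhamel_integrable[OF x2] t by auto
  show "(\<lambda>r. T (- r) (F1 r - F2 r)) integrable_on {a..t}"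
    by (rule integrable_T_convolution_diff[OF i1 i2])
  show "x1 t - x2 t = T (t - a) (x1 a - x2 a) + integral {a..t} (\<lambda>r. T (t - r) (F1 r - F2 r))"
    using duhamelD[OF x1 t] duhamelD[OF x2 t] integral_T_convolution_diff[OF i1 i2, of t]
    by (simp add: T_diff algebra_simps)
qed

lemma duhamel_unique:
  assumes x: "duhamel T (\<lambda>r. G r (x r)) a b x" and z: "duhamel T (\<lambda>r. G r (z r)) a b z"
    and L: "L \<ge> 0" "\<And>r w1 w2. r \<in> {a..b} \<Longrightarrow> norm (G r w1 - G r w2) \<le> L * norm (w1 - w2)"
    and "x a = z a" and t: "t \<in> {a..b}"
  shows "x t = z t"
proof -
  obtain C where C: "C \<ge> 1" "\<forall>s\<in>{0..b - a}. \<forall>v. norm (T s v) \<le> C * norm v"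
    using T_bounded_on_interval by blast
  define \<phi> where "\<phi> r = norm (x r - z r)" for r
  have \<phi>: "continuous_on {a..b} \<phi>"
    unfolding \<phi>_def using continuous_on_duhamel[OF x] continuous_on_duhamel[OF z]
    by (intro continuous_intros)
  have "\<phi> s \<le> 0 + (C * L) * integral {a..s} \<phi>" if s: "s \<in> {a..b}" for s
  proof -
    have "\<phi> s = norm (integral {a..s} (\<lambda>r. T (s - r) (G r (x r) - G r (z r))))"
      using duhamel_diff[OF x z s] \<open>x a = z a\<close> by (simp add: \<phi>_def)
    also have "\<dots> \<le> C * integral {a..s} (\<lambda>r. L * \<phi> r)"
    proof (rule norm_integral_T_convolution_le[OF duhamel_diff_integrable[OF x z s]])
      show "(\<lambda>r. L * \<phi> r) integrable_on {a..s}"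
        using s by (intro integrable_continuous_real continuous_intros continuous_on_subset[OF \<phi>]) auto
      show "norm (G r (x r) - G r (z r)) \<le> L * \<phi> r" if "r \<in> {a..s}" for r
        using L(2)[of r "x r" "z r"] that s by (auto simp: \<phi>_def)
    qed (use C s in auto)
    finally show ?thesis by simp
  qed
  then have "\<phi> t \<le> 0 * exp ((C * L) * (t - a))"
    by (intro gronwall[OF \<phi>] t) (use C L in auto)
  then show ?thesis by (simp add: \<phi>_def)
qed

end

section \<open>Existence of mild solutions by Picard iteration\<close>

lemma has_integral_power_over_fact:
  fixes a t :: real
  assumes "a \<le> t"
  shows "((\<lambda>r. (r - a) ^ n / fact n) has_integral (t - a) ^ Suc n / fact (Suc n)) {a..t}"
proof -
  have "((\<lambda>r. (r - a) ^ Suc n / fact (Suc n)) has_real_derivative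
      (real (Suc n) * (r - a) ^ n * 1 / fact (Suc n))) (at r within {a..t})" for r
    by (intro derivative_eq_intros DERIV_power_Suc) auto
  moreover have "real (Suc n) * (r - a) ^ n * 1 / fact (Suc n) = (r - a) ^ n / fact n" for r
    by (simp add: fact_Suc del: of_nat_Suc)
  ultimately show ?thesis
    using fundamental_theorem_of_calculus[OF assms, of "\<lambda>r. (r - a) ^ Suc n / fact (Suc n)"]
    by (simp add: has_real_derivative_iff_has_vector_derivative)
qed

text \<open>The bound on the \<open>n\<close>-th Picard increment is the \<open>n\<close>-th term of an exponential series,
  so the iterates converge uniformly.\<close>

locale volterra_lipschitz =
  fixes \<Phi> :: "(real \<Rightarrow> 'x::banach) \<Rightarrow> real \<Rightarrow> 'x" and a b L :: real
  assumes le: "a \<le> b" and L: "L \<ge> 0"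
    and continuous_on_\<Phi>: "\<And>w. continuous_on {a..b} w \<Longrightarrow> continuous_on {a..b} (\<Phi> w)"
    and \<Phi>_lipschitz: "\<And>w1 w2 t. continuous_on {a..b} w1 \<Longrightarrow> continuous_on {a..b} w2 \<Longrightarrow>
      t \<in> {a..b} \<Longrightarrow> norm (\<Phi> w1 t - \<Phi> w2 t) \<le> L * integral {a..t} (\<lambda>r. norm (w1 r - w2 r))"
begin

lemma continuous_on_iterate: "continuous_on {a..b} w \<Longrightarrow> continuous_on {a..b} ((\<Phi> ^^ n) w)"
  by (induction n) (simp_all add: continuous_on_\<Phi>)

lemma iterate_increment_le:
  assumes w: "continuous_on {a..b} w" and B: "\<And>t. t \<in> {a..b} \<Longrightarrow> norm (\<Phi> w t - w t) \<le> B"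
    and t: "t \<in> {a..b}"
  shows "norm ((\<Phi> ^^ Suc n) w t - (\<Phi> ^^ n) w t) \<le> B * L ^ n * ((t - a) ^ n / fact n)"
  using t
proof (induction n arbitrary: t)
  case 0
  then show ?case using B by simp
next
  case (Suc n)
  let ?d = "\<lambda>r. norm ((\<Phi> ^^ Suc n) w r - (\<Phi> ^^ n) w r)"
  have int: "((\<lambda>r. (r - a) ^ n / fact n) has_integral (t - a) ^ Suc n / fact (Suc n)) {a..t}"
    using has_integral_power_over_fact Suc.prems by auto
  have "norm ((\<Phi> ^^ Suc (Suc n)) w t - (\<Phi> ^^ Suc n) w t) \<le> L * integral {a..t} ?d"
    using \<Phi>_lipschitz[OF continuous_on_iterate[OF w, of "Suc n"] continuous_on_iterate[OF w, of n]
        Suc.prems] by simp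
  also have "integral {a..t} ?d \<le> integral {a..t} (\<lambda>r. B * L ^ n * ((r - a) ^ n / fact n))"
  proof (rule integral_le)
    show "?d integrable_on {a..t}"
      using Suc.prems by (intro integrable_continuous_real continuous_intros
          continuous_on_subset[OF continuous_on_iterate[OF w]]) auto
    show "(\<lambda>r. B * L ^ n * ((r - a) ^ n / fact n)) integrable_on {a..t}"
      using int by (intro integrable_on_mult_right) (auto simp: has_integral_iff)
  qed (use Suc in auto)
  also have "\<dots> = B * L ^ n * ((t - a) ^ Suc n / fact (Suc n))"
    by (simp only: integral_mult_right integral_unique[OF int])
  finally have "norm ((\<Phi> ^^ Suc (Suc n)) w t - (\<Phi> ^^ Suc n) w t) \<le>
      L * (B * L ^ n * ((t - a) ^ Suc n / fact (Suc n)))"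
    using L by (simp add: mult_left_mono)
  then show ?case by (simp add: algebra_simps)
qed

lemma iterates_uniform_limit:
  assumes w: "continuous_on {a..b} w"
  obtains x where "uniform_limit {a..b} (\<lambda>n. (\<Phi> ^^ n) w) x sequentially"
proof -
  have "compact ((\<lambda>t. norm (\<Phi> w t - w t)) ` {a..b})"
    by (intro compact_continuous_image continuous_intros continuous_on_\<Phi> w compact_Icc)
  then obtain B where "\<forall>y\<in>(\<lambda>t. norm (\<Phi> w t - w t)) ` {a..b}. \<bar>y\<bar> \<le> B"
    using compact_imp_bounded bounded_real by blast
  then have B: "\<And>t. t \<in> {a..b} \<Longrightarrow> norm (\<Phi> w t - w t) \<le> B" by force
  define M where "M k = B * ((L * (b - a)) ^ k / fact k)" for k
  have "norm ((\<Phi> ^^ Suc k) w t - (\<Phi> ^^ k) w t) \<le> M k" if t: "t \<in> {a..b}" for k t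
  proof -
    have "B \<ge> 0" using B[OF t] norm_ge_zero order_trans by blast
    then have "B * L ^ k * ((t - a) ^ k / fact k) \<le> B * L ^ k * ((b - a) ^ k / fact k)"
      using t L by (intro mult_left_mono divide_right_mono power_mono) auto
    then show ?thesis
      using iterate_increment_le[OF w B t, of k] by (simp add: M_def power_mult_distrib)
  qed
  moreover have "summable M"
    unfolding M_def using summable_mult[OF summable_exp[of "L * (b - a)"], of B]
    by (simp add: divide_inverse mult_ac)
  ultimately have "uniform_limit {a..b} (\<lambda>n t. \<Sum>k<n. (\<Phi> ^^ Suc k) w t - (\<Phi> ^^ k) w t)
      (\<lambda>t. \<Sum>k. (\<Phi> ^^ Suc k) w t - (\<Phi> ^^ k) w t) sequentially"
    by (rule Weierstrass_m_test)
  then have "uniform_limit {a..b} (\<lambda>n t. w t + (\<Sum>k<n. (\<Phi> ^^ Suc k) w t - (\<Phi> ^^ k) w t))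
      (\<lambda>t. w t + (\<Sum>k. (\<Phi> ^^ Suc k) w t - (\<Phi> ^^ k) w t)) sequentially"
    by (intro uniform_limit_add uniform_limit_const)
  moreover have "w t + (\<Sum>k<n. (\<Phi> ^^ Suc k) w t - (\<Phi> ^^ k) w t) = (\<Phi> ^^ n) w t" for n t
    using sum_lessThan_telescope[of "\<lambda>k. (\<Phi> ^^ k) w t" n] by (simp add: funpow_0 del: funpow.simps)
  ultimately show ?thesis using that by auto
qed

lemma fixed_point_exists: "\<exists>x. continuous_on {a..b} x \<and> (\<forall>t\<in>{a..b}. \<Phi> x t = x t)"
proof -
  have w: "continuous_on {a..b} (\<lambda>_. 0)" by simp
  obtain x where lim: "uniform_limit {a..b} (\<lambda>n. (\<Phi> ^^ n) (\<lambda>_. 0)) x sequentially"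
    using iterates_uniform_limit[OF w] by blast
  have x: "continuous_on {a..b} x"
    by (rule uniform_limit_theorem[OF _ lim]) (auto simp: continuous_on_iterate[OF w])
  have "\<Phi> x t = x t" if t: "t \<in> {a..b}" for t
  proof (rule LIMSEQ_unique)
    show "(\<lambda>n. (\<Phi> ^^ Suc n) (\<lambda>_. 0) t) \<longlonglongrightarrow> x t"
      using tendsto_uniform_limitI[OF lim t] by (rule LIMSEQ_Suc)
    show "(\<lambda>n. (\<Phi> ^^ Suc n) (\<lambda>_. 0) t) \<longlonglongrightarrow> \<Phi> x t"
    proof (rule tendstoI)
      fix e :: real assume "e > 0"
      define e' where "e' = e / (L * (b - a) + 1)"
      have Lba: "L * (b - a) \<ge> 0" using L le by simp
      then have e': "e' > 0" using \<open>e > 0\<close> by (simp add: e'_def)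
      show "\<forall>\<^sub>F n in sequentially. dist ((\<Phi> ^^ Suc n) (\<lambda>_. 0) t) (\<Phi> x t) < e"
        using uniform_limitD[OF lim e']
      proof eventually_elim
        case (elim n)
        have "dist ((\<Phi> ^^ Suc n) (\<lambda>_. 0) t) (\<Phi> x t) \<le>
            L * integral {a..t} (\<lambda>r. norm ((\<Phi> ^^ n) (\<lambda>_. 0) r - x r))"
          using \<Phi>_lipschitz[OF continuous_on_iterate[OF w] x t] by (simp add: dist_norm)
        also have "\<dots> \<le> L * integral {a..t} (\<lambda>r. e')"
          using elim t L
          by (intro mult_left_mono integral_le integrable_continuous_real continuous_intros
              continuous_on_subset[OF continuous_on_iterate[OF w]] continuous_on_subset[OF x])
            (auto simp: dist_norm less_imp_le)
        also have "\<dots> = L * ((t - a) * e')" using t by simp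
        also have "\<dots> \<le> L * ((b - a) * e')" using t L e' by (intro mult_left_mono mult_right_mono) auto
        also have "\<dots> < e"
          using e' Lba \<open>e > 0\<close> by (simp add: e'_def field_simps)
        finally show ?case .
      qed
    qed
  qed
  then show ?thesis using x by blast
qed

end

definition duhamel_map ::
  "(real \<Rightarrow> 'x::banach \<Rightarrow> 'x) \<Rightarrow> (real \<Rightarrow> 'x \<Rightarrow> 'x) \<Rightarrow> real \<Rightarrow> 'x \<Rightarrow> (real \<Rightarrow> 'x) \<Rightarrow> real \<Rightarrow> 'x" where
  "duhamel_map T G a y w t = T (t - a) y + integral {a..t} (\<lambda>r. T (t - r) (G r (w r)))"

context c0_group
begin

lemma continuous_on_duhamel_map:
  assumes "(\<lambda>r. T (- r) (G r (w r))) integrable_on {a..b}"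
  shows "continuous_on {a..b} (duhamel_map T G a y w)"
proof -
  have "continuous_on {a..b} (\<lambda>t. T (t - a) y + T t (integral {a..t} (\<lambda>r. T (- r) (G r (w r)))))"
    by (intro continuous_intros continuous_on_T_orbit indefinite_integral_continuous_1 assms)
  then show ?thesis
  proof (rule continuous_on_eq)
    fix t assume "t \<in> {a..b}"
    then have "(\<lambda>r. T (- r) (G r (w r))) integrable_on {a..t}"
      using assms by (auto intro: integrable_subinterval_real)
    then show "T (t - a) y + T t (integral {a..t} (\<lambda>r. T (- r) (G r (w r)))) = duhamel_map T G a y w t"
      by (simp add: duhamel_map_def integral_T_convolution)
  qed
qed

lemma duhamel_map_lipschitz:
  assumes i1: "(\<lambda>r. T (- r) (G r (w1 r))) integrable_on {a..t}"
    and i2: "(\<lambda>r. T (- r) (G r (w2 r))) integrable_on {a..t}"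
    and w: "continuous_on {a..t} w1" "continuous_on {a..t} w2"
    and L: "\<And>r w1 w2. r \<in> {a..t} \<Longrightarrow> norm (G r w1 - G r w2) \<le> L * norm (w1 - w2)"
    and C: "C \<ge> 0" "\<And>s v. s \<in> {0..t - a} \<Longrightarrow> norm (T s v) \<le> C * norm v"
  shows "norm (duhamel_map T G a y w1 t - duhamel_map T G a y w2 t) \<le>
      C * L * integral {a..t} (\<lambda>r. norm (w1 r - w2 r))"
proof -
  have "norm (duhamel_map T G a y w1 t - duhamel_map T G a y w2 t) =
      norm (integral {a..t} (\<lambda>r. T (t - r) (G r (w1 r) - G r (w2 r))))"
    using integral_T_convolution_diff[OF i1 i2, of t] by (simp add: duhamel_map_def)
  also have "\<dots> \<le> C * integral {a..t} (\<lambda>r. L * norm (w1 r - w2 r))"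
    using L C w by (intro norm_integral_T_convolution_le integrable_T_convolution_diff[OF i1 i2]
        integrable_continuous_real continuous_intros) auto
  finally show ?thesis by (simp add: mult.assoc)
qed

lemma duhamel_exists:
  assumes "a \<le> b" and L: "L \<ge> 0" "\<And>r w1 w2. r \<in> {a..b} \<Longrightarrow> norm (G r w1 - G r w2) \<le> L * norm (w1 - w2)"
    and G: "\<And>w. continuous_on {a..b} w \<Longrightarrow> (\<lambda>r. T (- r) (G r (w r))) integrable_on {a..b}"
  shows "\<exists>x. x a = y \<and> duhamel T (\<lambda>r. G r (x r)) a b x"
proof -
  obtain C where C: "C \<ge> 1" "\<forall>s\<in>{0..b - a}. \<forall>v. norm (T s v) \<le> C * norm v"
    using T_bounded_on_interval by blast
  have "norm (duhamel_map T G a y w1 t - duhamel_map T G a y w2 t) \<le>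
      C * L * integral {a..t} (\<lambda>r. norm (w1 r - w2 r))"
    if w: "continuous_on {a..b} w1" "continuous_on {a..b} w2" and t: "t \<in> {a..b}" for w1 w2 t
    using t C L(2) by (intro duhamel_map_lipschitz integrable_subinterval_real[OF G] w
        continuous_on_subset[OF w(1)] continuous_on_subset[OF w(2)]) auto
  then interpret volterra_lipschitz "duhamel_map T G a y" a b "C * L"
    using assms C continuous_on_duhamel_map by unfold_locales auto
  obtain x where x: "continuous_on {a..b} x" "\<And>t. t \<in> {a..b} \<Longrightarrow> duhamel_map T G a y x t = x t"
    using fixed_point_exists by blast
  then have "x a = y" using x(2)[of a] \<open>a \<le> b\<close> by (simp add: duhamel_map_def)
  moreover have "duhamel T (\<lambda>r. G r (x r)) a b x"
    using x G[OF x(1)] \<open>x a = y\<close> by (auto simp: duhamel_def duhamel_map_def)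
  ultimately show ?thesis by blast
qed

end

section \<open>Switching signals and sampling sequences\<close>

lemma ex_ge_if_filterlim_at_top:
  fixes g :: "nat \<Rightarrow> 'a::linorder"
  shows "filterlim g at_top sequentially \<Longrightarrow> \<exists>n. b \<le> g n"
  unfolding filterlim_at_top eventually_sequentially by blast

lemma unique_interval_index:
  fixes g :: "nat \<Rightarrow> real"
  assumes g: "strict_mono g" "filterlim g at_top sequentially" and t: "g 0 \<le> t"
  shows "\<exists>!k. g k \<le> t \<and> t < g (Suc k)"
proof -
  obtain n where "t + 1 \<le> g n" using ex_ge_if_filterlim_at_top[OF g(2)] by blast
  then have "t < g n" by simp
  then have m: "t < g (LEAST n. t < g n)" by (rule LeastI)
  then obtain k where k: "(LEAST n. t < g n) = Suc k"
    using t by (metis linorder_not_less not0_implies_Suc)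
  have k_le: "g k \<le> t" using not_less_Least[of k "\<lambda>n. t < g n"] k by simp
  have k_less: "t < g (Suc k)" using m k by simp
  have "k' = k" if k': "g k' \<le> t" "t < g (Suc k')" for k'
  proof (rule ccontr)
    assume "k' \<noteq> k"
    then consider "Suc k' \<le> k" | "Suc k \<le> k'" by linarith
    then show False
    proof cases
      case 1
      then show False using strict_mono_leD[OF g(1) 1] k' k_le by linarith
    next
      case 2
      then show False using strict_mono_leD[OF g(1) 2] k' k_less by linarith
    qed
  qed
  then show ?thesis using k_le k_less by blast
qed

lemma integrable_on_degenerate_interval:
  fixes f :: "real \<Rightarrow> 'b::real_normed_vector"
  shows "c \<le> a \<Longrightarrow> f integrable_on {a..c}"
  by (metis integrable_on_null box_real(2) content_real_eq_0)

lemma switching_seqD: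
  assumes "switching_seq \<sigma> ts"
  shows "ts 0 = 0" "strict_mono ts" "filterlim ts at_top sequentially"
    "\<And>k t. t \<in> {ts k..<ts (Suc k)} \<Longrightarrow> \<sigma> t = \<sigma> (ts k)"
  using assms unfolding switching_seq_def by auto

lemma integrable_on_switched_piece:
  fixes H :: "'q \<Rightarrow> real \<Rightarrow> 'b::banach"
  assumes sw: "switching_seq \<sigma> ts" and H: "\<And>q. continuous_on {u..v} (H q)"
    and sub: "{u..v} \<subseteq> {ts n..ts (Suc n)}"
  shows "(\<lambda>r. H (\<sigma> r) r) integrable_on {u..v}"
proof (rule integrable_spike_finite[where S="{ts (Suc n)}" and f="H (\<sigma> (ts n))"])
  show "H (\<sigma> (ts n)) integrable_on {u..v}" by (rule integrable_continuous_real[OF H])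
  show "H (\<sigma> r) r = H (\<sigma> (ts n)) r" if "r \<in> {u..v} - {ts (Suc n)}" for r
    using switching_seqD(4)[OF sw, of r n] that sub by auto
qed auto

text \<open>On \<open>[a, b]\<close> the switching times, clamped to \<open>[a, b]\<close>, cut the interval into pieces
  on each of which the signal is constant.\<close>

lemma integrable_on_switched:
  fixes H :: "'q \<Rightarrow> real \<Rightarrow> 'b::banach"
  assumes sw: "switching_seq \<sigma> ts" and a: "0 \<le> a" and H: "\<And>q. continuous_on {a..b} (H q)"
  shows "(\<lambda>r. H (\<sigma> r) r) integrable_on {a..b}"
proof (cases "a \<le> b")
  case False
  then show ?thesis by (intro integrable_on_degenerate_interval) simp
next
  case True
  note ts = switching_seqD[OF sw]
  define c where "c n = max a (min b (ts n))" for n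
  have c_mono: "c n \<le> c (Suc n)" for n
    using strict_mono_less_eq[OF ts(2), of n "Suc n"] by (auto simp: c_def)
  have piece: "(\<lambda>r. H (\<sigma> r) r) integrable_on {c n..c (Suc n)}" for n
  proof (cases "c n < c (Suc n)")
    case True
    have "ts n < ts (Suc n)" using ts(2) by (simp add: strict_mono_def)
    then have "{c n..c (Suc n)} \<subseteq> {ts n..ts (Suc n)}" "{c n..c (Suc n)} \<subseteq> {a..b}"
      using True by (auto simp: c_def)
    then show ?thesis
      by (intro integrable_on_switched_piece[OF sw] continuous_on_subset[OF H])
  qed (rule integrable_on_degenerate_interval, simp)
  have "(\<lambda>r. H (\<sigma> r) r) integrable_on {a..c n}" for n
  proof (induction n)
    case 0
    show ?case using ts(1) a True by (intro integrable_on_degenerate_interval) (simp add: c_def)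
  next
    case (Suc n)
    have "a \<le> c n" by (simp add: c_def)
    then show ?case
      using Henstock_Kurzweil_Integration.integrable_combine[OF _ c_mono Suc piece] by blast
  qed
  moreover obtain n where "b \<le> ts n" using ex_ge_if_filterlim_at_top[OF ts(3)] by blast
  then have "c n = b" using True by (simp add: c_def)
  ultimately show ?thesis by metis
qed

lemma PC_shift:
  assumes "\<sigma> \<in> PC" and a: "0 \<le> a"
  shows "(\<lambda>t. \<sigma> (t + a)) \<in> PC"
proof -
  obtain ts where "switching_seq \<sigma> ts" using assms(1) by (auto simp: PC_def)
  note ts = switching_seqD[OF this]
  obtain m where m: "ts m \<le> a" "a < ts (Suc m)"
    using unique_interval_index[OF ts(2,3), of a] ts(1) a by auto
  define ts' where "ts' n = (if n = 0 then 0 else ts (m + n) - a)" for n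
  have "strict_mono ts'"
    by (rule strict_mono_Suc_iff[THEN iffD2]) (use m ts(2) in \<open>auto simp: ts'_def strict_mono_def\<close>)
  moreover have "filterlim ts' at_top sequentially"
  proof (rule filterlim_at_top_mono)
    show "filterlim (\<lambda>n. - a + ts n) at_top sequentially"
      by (rule filterlim_tendsto_add_at_top[OF tendsto_const ts(3)])
    show "\<forall>\<^sub>F n in sequentially. - a + ts n \<le> ts' n"
      using eventually_gt_at_top[of 0]
      by eventually_elim (simp add: ts'_def strict_mono_less_eq[OF ts(2)])
  qed
  moreover have "\<sigma> (t + a) = \<sigma> (ts' k + a)" if t: "t \<in> {ts' k..<ts' (Suc k)}" for k t
  proof (cases "k = 0")
    case True
    then have "\<sigma> (t + a) = \<sigma> (ts m)" and "\<sigma> a = \<sigma> (ts m)"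
      using t m by (auto intro!: ts(4) simp: ts'_def)
    then show ?thesis using True by (simp add: ts'_def)
  next
    case False
    then have "\<sigma> (t + a) = \<sigma> (ts (m + k))"
      using t by (intro ts(4)) (auto simp: ts'_def)
    then show ?thesis using False by (simp add: ts'_def)
  qed
  ultimately have "switching_seq (\<lambda>t. \<sigma> (t + a)) ts'"
    by (simp add: switching_seq_def ts'_def)
  then show ?thesis by (auto simp: PC_def)
qed

definition sample_index :: "(nat \<Rightarrow> real) \<Rightarrow> real \<Rightarrow> nat" where
  "sample_index s t = (THE k. s k \<le> t \<and> t < s (Suc k))"

lemma sampling_seqD:
  assumes "sampling_seq s"
  shows "s 0 = 0" "strict_mono s" "filterlim s at_top sequentially"
    "s k < s (Suc k)" "0 \<le> s k" "i \<le> j \<Longrightarrow> s i \<le> s j"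
proof -
  show "s 0 = 0" "strict_mono s" "filterlim s at_top sequentially"
    using assms by (auto simp: sampling_seq_def)
  then show "s k < s (Suc k)" "0 \<le> s k" "i \<le> j \<Longrightarrow> s i \<le> s j"
    using strict_mono_leD[of s 0 k] strict_mono_leD[of s i j] by (auto simp: strict_mono_def)
qed

lemma sample_index_eq:
  assumes "sampling_seq s" "s k \<le> t" "t < s (Suc k)"
  shows "sample_index s t = k"
proof -
  have "s 0 \<le> t" using sampling_seqD(6)[OF assms(1), of 0 k] assms(2) by simp
  then have "\<exists>!k. s k \<le> t \<and> t < s (Suc k)"
    using sampling_seqD(2,3)[OF assms(1)] by (intro unique_interval_index)
  then show ?thesis unfolding sample_index_def using assms(2,3) by blast
qed

lemma sample_index:
  assumes "sampling_seq s" "0 \<le> t"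
  shows "s (sample_index s t) \<le> t" "t < s (Suc (sample_index s t))"
proof -
  obtain k where "s k \<le> t" "t < s (Suc k)"
    using unique_interval_index[of s t] sampling_seqD[OF assms(1)] assms(2) by auto
  then show "s (sample_index s t) \<le> t" "t < s (Suc (sample_index s t))"
    using sample_index_eq[OF assms(1)] by auto
qed

section \<open>Solutions of the closed-loop and the sampled-data system\<close>

lemma continuous_on_atLeast_if_atLeastAtMost:
  fixes w :: "real \<Rightarrow> 'a::topological_space"
  assumes "\<And>c. 0 \<le> c \<Longrightarrow> continuous_on {0..c} w"
  shows "continuous_on {0..} w"
  unfolding continuous_on_eq_continuous_within
proof
  fix t :: real assume t: "t \<in> {0..}"
  have "continuous (at t within {0..t + 1}) w"
    using assms[of "t + 1"] t by (auto simp: continuous_on_eq_continuous_within)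
  moreover have "at t within {0..t + 1} = at t within {0..}"
    by (rule at_within_nhd[of _ "{..<t + 1}"]) auto
  ultimately show "continuous (at t within {0..}) w" by simp
qed

lemma the_zero_extension_eq:
  fixes x :: "real \<Rightarrow> 'a::zero"
  assumes x: "P x" and ext: "P (\<lambda>t. if t < 0 then 0 else x t)"
    and unique: "\<And>x1 x2 t. P x1 \<Longrightarrow> P x2 \<Longrightarrow> 0 \<le> t \<Longrightarrow> x1 t = x2 t"
    and t: "0 \<le> t"
  shows "(THE x. P x \<and> (\<forall>r<0. x r = 0)) t = x t"
proof -
  let ?z = "\<lambda>t. if t < 0 then 0 else x t"
  have "(THE x. P x \<and> (\<forall>r<0. x r = 0)) = ?z"
  proof (rule the_equality)
    fix x' assume x': "P x' \<and> (\<forall>r<0. x' r = 0)"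
    show "x' = ?z"
    proof
      fix r
      show "x' r = ?z r" using x' unique[of x' ?z r] ext by (cases "r < 0") (auto simp: not_less)
    qed
  qed (use ext in auto)
  then show ?thesis using t by simp
qed

context c0_group
begin

lemma duhamel_halfline_exists:
  assumes L: "L \<ge> 0" "\<And>r w1 w2. 0 \<le> r \<Longrightarrow> norm (G r w1 - G r w2) \<le> L * norm (w1 - w2)"
    and G: "\<And>b w. continuous_on {0..b} w \<Longrightarrow> (\<lambda>r. T (- r) (G r (w r))) integrable_on {0..b}"
  shows "\<exists>x. x 0 = y \<and> continuous_on {0..} x \<and> (\<forall>b\<ge>0. duhamel T (\<lambda>r. G r (x r)) 0 b x)"
proof -
  have "\<exists>x. x 0 = y \<and> duhamel T (\<lambda>r. G r (x r)) 0 (real n) x" for n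
    using L G by (intro duhamel_exists) auto
  then obtain W where W0: "\<And>n. W n 0 = y"
    and W: "\<And>n. duhamel T (\<lambda>r. G r (W n r)) 0 (real n) (W n)"
    by metis
  define x where "x t = W (nat \<lceil>t\<rceil>) t" for t
  have xW: "x t = W n t" if "0 \<le> t" "t \<le> real n" for n t
  proof -
    have "t \<le> real (nat \<lceil>t\<rceil>)" by (rule real_nat_ceiling_ge)
    show ?thesis
      unfolding x_def
    proof (rule duhamel_unique[where G=G and L=L and a=0 and b=t and x="W (nat \<lceil>t\<rceil>)" and z="W n"])
      show "duhamel T (\<lambda>r. G r (W (nat \<lceil>t\<rceil>) r)) 0 t (W (nat \<lceil>t\<rceil>))"
        using \<open>t \<le> real (nat \<lceil>t\<rceil>)\<close> by (intro duhamel_subinterval[OF W]) auto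
      show "duhamel T (\<lambda>r. G r (W n r)) 0 t (W n)"
        using that by (intro duhamel_subinterval[OF W]) auto
    qed (use that L W0 in auto)
  qed
  have x: "duhamel T (\<lambda>r. G r (x r)) 0 b x" if "0 \<le> b" for b
  proof (rule duhamel_cong)
    show "duhamel T (\<lambda>r. G r (W (nat \<lceil>b\<rceil>) r)) 0 b (W (nat \<lceil>b\<rceil>))"
      by (rule duhamel_subinterval[OF W]) (auto simp: real_nat_ceiling_ge)
    have xWb: "x r = W (nat \<lceil>b\<rceil>) r" if "0 \<le> r" "r \<le> b" for r
      by (rule xW) (use that real_nat_ceiling_ge[of b] in linarith)+
    show "G r (W (nat \<lceil>b\<rceil>) r) = G r (x r)" if "r \<in> {0..<b}" for r
      using xWb that by auto
    show "W (nat \<lceil>b\<rceil>) r = x r" if "r \<in> {0..b}" for r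
      using xWb that by auto
  qed
  have "continuous_on {0..} x"
    by (rule continuous_on_atLeast_if_atLeastAtMost) (use x continuous_on_duhamel in blast)
  moreover have "x 0 = y" using xW[of 0 0] W0 by simp
  ultimately show ?thesis using x by blast
qed

lemma duhamel_if_half_open:
  assumes "a < b" and x: "continuous_on {a..b} x" and G: "(\<lambda>r. T (- r) (F r)) integrable_on {a..b}"
    and eq: "\<And>t. t \<in> {a..<b} \<Longrightarrow> x t = T (t - a) (x a) + integral {a..t} (\<lambda>r. T (t - r) (F r))"
  shows "duhamel T F a b x"
  unfolding duhamel_def
proof (intro conjI ballI G)
  define R where "R t = T (t - a) (x a) + T t (integral {a..t} (\<lambda>r. T (- r) (F r)))" for t
  have R: "integral {a..t} (\<lambda>r. T (t - r) (F r)) = T t (integral {a..t} (\<lambda>r. T (- r) (F r)))"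
    if "t \<in> {a..b}" for t
    using integrable_subinterval_real[OF G, of a t] that by (intro integral_T_convolution) auto
  have cont: "continuous_on {a..b} (\<lambda>t. x t - R t)"
    unfolding R_def by (intro continuous_intros x continuous_on_T_orbit indefinite_integral_continuous_1 G)
  have zero: "x t - R t = 0" if "t \<in> {a..<b}" for t
  proof -
    have "x t = T (t - a) (x a) + integral {a..t} (\<lambda>r. T (t - r) (F r))" by (rule eq[OF that])
    also have "\<dots> = R t" unfolding R_def using R[of t] that by simp
    finally show ?thesis by simp
  qed
  have diff_zero: "(\<lambda>t. x t - R t) t = 0" if "t \<in> {a..b}" for t
  proof (rule continuous_constant_on_closure[where S="{a..<b}"])
    show "continuous_on (closure {a..<b}) (\<lambda>t. x t - R t)" using cont \<open>a < b\<close> by simp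
    show "t \<in> closure {a..<b}" using that \<open>a < b\<close> by simp
  qed (rule zero)
  show "x t = T (t - a) (x a) + integral {a..t} (\<lambda>r. T (t - r) (F r))" if "t \<in> {a..b}" for t
  proof -
    have "x t = R t" using diff_zero[OF that] by simp
    also have "\<dots> = T (t - a) (x a) + integral {a..t} (\<lambda>r. T (t - r) (F r))"
      unfolding R_def using R[OF that] by simp
    finally show ?thesis .
  qed
qed

end

definition sampled_input ::
  "(real \<Rightarrow> 'x::banach \<Rightarrow> 'x) \<Rightarrow> ('x \<Rightarrow> 'u) \<Rightarrow> (nat \<Rightarrow> real) \<Rightarrow> (real \<Rightarrow> 'x) \<Rightarrow> real \<Rightarrow> 'u" where
  "sampled_input T K s x r = K (T (r - s (sample_index s r)) (x (s (sample_index s r))))"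

locale closed_loop_system = c0_group T for T :: "real \<Rightarrow> 'x::banach \<Rightarrow> 'x" +
  fixes f :: "'q \<Rightarrow> 'x \<times> 'u::banach \<Rightarrow> 'x" and K :: "'x \<Rightarrow> 'u" and Lf LK :: real
  assumes Lf: "Lf > 0" and f_lipschitz: "\<And>q. Lf-lipschitz_on UNIV (f q)" and f_zero: "\<And>q. f q (0, 0) = 0"
    and K_lipschitz: "LK-lipschitz_on UNIV K" and K_zero: "K 0 = 0"
begin

lemma LK_nonneg: "LK \<ge> 0"
  using K_lipschitz by (rule lipschitz_on_nonneg)

lemma norm_f_diff_le: "norm (f q (w1, u1) - f q (w2, u2)) \<le> Lf * (norm (w1 - w2) + norm (u1 - u2))"
proof -
  have "norm (f q (w1, u1) - f q (w2, u2)) \<le> Lf * norm (w1 - w2, u1 - u2)"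
    using lipschitz_onD[OF f_lipschitz, of "(w1, u1)" "(w2, u2)"] by (simp add: dist_norm)
  also have "\<dots> \<le> Lf * (norm (w1 - w2) + norm (u1 - u2))"
    using Lf norm_Pair_le by (intro mult_left_mono) auto
  finally show ?thesis .
qed

lemma norm_f_diff_state_le: "norm (f q (w1, u) - f q (w2, u)) \<le> Lf * norm (w1 - w2)"
  using norm_f_diff_le[of q w1 u w2 u] by simp

lemma norm_K_diff_le: "norm (K v1 - K v2) \<le> LK * norm (v1 - v2)"
  using lipschitz_onD[OF K_lipschitz, of v1 v2] by (simp add: dist_norm)

lemma norm_f_le: "norm (f q (w, u)) \<le> Lf * (norm w + norm u)"
  using norm_f_diff_le[of q w u 0 0] by (simp add: f_zero)

lemma norm_K_le: "norm (K v) \<le> LK * norm v"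
  using norm_K_diff_le[of v 0] by (simp add: K_zero)

lemma norm_closed_loop_diff_le: "norm (f q (w1, K w1) - f q (w2, K w2)) \<le> Lf * (1 + LK) * norm (w1 - w2)"
proof -
  have "norm (f q (w1, K w1) - f q (w2, K w2)) \<le> Lf * (norm (w1 - w2) + LK * norm (w1 - w2))"
    using norm_f_diff_le[of q w1 "K w1" w2 "K w2"] norm_K_diff_le[of w1 w2] Lf
    by (meson add_left_mono mult_left_mono less_imp_le order_trans)
  then show ?thesis by (simp add: algebra_simps)
qed

lemma continuous_on_f [continuous_intros]:
  "continuous_on S h \<Longrightarrow> continuous_on S k \<Longrightarrow> continuous_on S (\<lambda>r. f q (h r, k r))"
  using lipschitz_on_continuous_on[OF f_lipschitz]
  by (rule continuous_on_compose2) (auto intro: continuous_on_Pair)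

lemma continuous_on_K [continuous_intros]: "continuous_on S h \<Longrightarrow> continuous_on S (\<lambda>r. K (h r))"
  using lipschitz_on_continuous_on[OF K_lipschitz] by (rule continuous_on_compose2) auto

lemma integrable_on_switched_f:
  assumes "switching_seq \<sigma> ts" "0 \<le> a" "continuous_on {a..b} w" "continuous_on {a..b} v"
  shows "(\<lambda>r. T (- r) (f (\<sigma> r) (w r, K (v r)))) integrable_on {a..b}"
  using assms by (intro integrable_on_switched[where H="\<lambda>q r. T (- r) (f q (w r, K (v r)))"]
      continuous_intros)

lemma
  assumes "mild_sol T f K q y w"
  shows mild_sol_continuous: "continuous_on {0..} w"
    and mild_solD: "0 \<le> t \<Longrightarrow> w t = T t y + integral {0..t} (\<lambda>r. T (t - r) (f q (w r, K (w r))))"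
  using assms unfolding mild_sol_def by blast+

lemma mild_sol_initial: "mild_sol T f K q y w \<Longrightarrow> w 0 = y"
  using mild_solD[of q y w 0] by simp

lemma mild_sol_cong:
  assumes w: "mild_sol T f K q y w" and eq: "\<And>t. 0 \<le> t \<Longrightarrow> w' t = w t"
  shows "mild_sol T f K q y w'"
  unfolding mild_sol_def
proof (intro conjI allI impI)
  show "continuous_on {0..} w'"
    using mild_sol_continuous[OF w] by (rule continuous_on_eq) (simp add: eq)
  fix t :: real assume t: "0 \<le> t"
  have "integral {0..t} (\<lambda>r. T (t - r) (f q (w r, K (w r)))) =
      integral {0..t} (\<lambda>r. T (t - r) (f q (w' r, K (w' r))))"
    by (rule integral_cong) (simp add: eq)
  then show "w' t = T t y + integral {0..t} (\<lambda>r. T (t - r) (f q (w' r, K (w' r))))"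
    using mild_solD[OF w t] eq[OF t] by simp
qed

lemma mild_sol_duhamel:
  assumes w: "mild_sol T f K q y w" and "0 \<le> b"
  shows "duhamel T (\<lambda>r. f q (w r, K (w r))) 0 b w"
  unfolding duhamel_def
proof (intro conjI ballI)
  have "continuous_on {0..b} w" using mild_sol_continuous[OF w] by (rule continuous_on_subset) auto
  then show "(\<lambda>r. T (- r) (f q (w r, K (w r)))) integrable_on {0..b}"
    by (intro integrable_continuous_real continuous_intros)
  show "w t = T (t - 0) (w 0) + integral {0..t} (\<lambda>r. T (t - r) (f q (w r, K (w r))))"
    if "t \<in> {0..b}" for t
    using mild_solD[OF w, of t] mild_sol_initial[OF w] that by simp
qed

lemma mild_sol_unique:
  assumes "mild_sol T f K q y w1" "mild_sol T f K q y w2" "0 \<le> t"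
  shows "w1 t = w2 t"
proof (rule duhamel_unique[where G="\<lambda>r v. f q (v, K v)" and L="Lf * (1 + LK)" and a=0 and b=t])
  show "duhamel T (\<lambda>r. f q (w1 r, K (w1 r))) 0 t w1" by (rule mild_sol_duhamel[OF assms(1,3)])
  show "duhamel T (\<lambda>r. f q (w2 r, K (w2 r))) 0 t w2" by (rule mild_sol_duhamel[OF assms(2,3)])
qed (use assms LK_nonneg Lf norm_closed_loop_diff_le mild_sol_initial[OF assms(1)]
    mild_sol_initial[OF assms(2)] in auto)

lemma mild_sol_exists: "\<exists>w. mild_sol T f K q y w"
proof -
  obtain x where x: "x 0 = y" "continuous_on {0..} x"
    "\<And>b. 0 \<le> b \<Longrightarrow> duhamel T (\<lambda>r. f q (x r, K (x r))) 0 b x"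
    using duhamel_halfline_exists[of "Lf * (1 + LK)" "\<lambda>r w. f q (w, K w)" y] Lf LK_nonneg
      norm_closed_loop_diff_le
    by (force intro: integrable_continuous_real continuous_intros)
  have "x t = T t y + integral {0..t} (\<lambda>r. T (t - r) (f q (x r, K (x r))))" if "0 \<le> t" for t
    using duhamelD[OF x(3)[OF that], of t] that x(1) by simp
  then have "mild_sol T f K q y x"
    unfolding mild_sol_def using x(2) by blast
  then show ?thesis by blast
qed

lemma Tq_eq:
  assumes w: "mild_sol T f K q y w" and "0 \<le> t"
  shows "Tq T f K q t y = w t"
  unfolding Tq_def
proof (rule the_zero_extension_eq[where P="mild_sol T f K q y", OF w _ _ \<open>0 \<le> t\<close>])
  show "mild_sol T f K q y (\<lambda>t. if t < 0 then 0 else w t)" by (rule mild_sol_cong[OF w]) simp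
qed (blast intro: mild_sol_unique)

lemma Tq_zero_time: "Tq T f K q 0 y = y"
proof -
  obtain w where "mild_sol T f K q y w" using mild_sol_exists by blast
  then show ?thesis using Tq_eq[of q y w 0] mild_sol_initial by simp
qed

end

lemma switching_seq_some: "\<sigma> \<in> PC \<Longrightarrow> switching_seq \<sigma> (SOME ts. switching_seq \<sigma> ts)"
  using someI[of "switching_seq \<sigma>"] unfolding PC_def by blast

context closed_loop_system
begin

lemma phi0_eq:
  assumes "\<sigma> \<in> PC" and ts: "ts = (SOME ts. switching_seq \<sigma> ts)" and t: "ts k \<le> t" "t < ts (Suc k)"
  shows "phi0 T f K t y \<sigma> = Tq T f K (\<sigma> (ts k)) (t - ts k) (sw_state T f K \<sigma> ts y k)"
proof -
  note sw = switching_seqD[OF switching_seq_some[OF assms(1), folded ts]]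
  have "ts 0 \<le> t" using strict_mono_leD[OF sw(2), of 0 k] t by simp
  then have "(THE k. ts k \<le> t \<and> t < ts (Suc k)) = k"
    by (rule the1_equality[OF unique_interval_index[OF sw(2,3)]]) (use t in auto)
  then show ?thesis unfolding phi0_def Let_def ts[symmetric] by simp
qed

lemma phi0_zero_time:
  assumes "\<sigma> \<in> PC"
  shows "phi0 T f K 0 y \<sigma> = y"
proof -
  define ts where "ts = (SOME ts. switching_seq \<sigma> ts)"
  note sw = switching_seqD[OF switching_seq_some[OF assms(1)], folded ts_def]
  have "ts 0 < ts (Suc 0)" using sw(2) by (simp add: strict_mono_def)
  then show ?thesis using phi0_eq[OF assms ts_def, of 0 0] sw(1) by (simp add: Tq_zero_time)
qed

lemma phi0_duhamel_piece:
  assumes "\<sigma> \<in> PC" and ts: "ts = (SOME ts. switching_seq \<sigma> ts)"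
  shows "duhamel T (\<lambda>r. f (\<sigma> r) (phi0 T f K r y \<sigma>, K (phi0 T f K r y \<sigma>)))
      (ts k) (ts (Suc k)) (\<lambda>t. phi0 T f K t y \<sigma>)"
proof -
  note sw = switching_seqD[OF switching_seq_some[OF assms(1), folded ts]]
  let ?S = "sw_state T f K \<sigma> ts y"
  obtain W where W: "mild_sol T f K (\<sigma> (ts k)) (?S k) W" using mild_sol_exists by blast
  have less: "ts k < ts (Suc k)" for k using sw(2) by (simp add: strict_mono_def)
  have phi0_W: "phi0 T f K t y \<sigma> = W (t - ts k)" if t: "t \<in> {ts k..ts (Suc k)}" for t
  proof (cases "t < ts (Suc k)")
    case True
    then show ?thesis using phi0_eq[OF assms, of k t] Tq_eq[OF W] t by simp
  next
    case False
    then have "t = ts (Suc k)" using t by simp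
    then have "phi0 T f K t y \<sigma> = Tq T f K (\<sigma> (ts (Suc k))) 0 (?S (Suc k))"
      using phi0_eq[OF assms, of "Suc k" t] less[of "Suc k"] by simp
    also have "\<dots> = W (t - ts k)"
      using Tq_eq[OF W] less[of k] \<open>t = ts (Suc k)\<close> by (simp add: Tq_zero_time)
    finally show ?thesis .
  qed
  have "duhamel T (\<lambda>r. f (\<sigma> (ts k)) (W (r - ts k), K (W (r - ts k)))) (ts k) (ts (Suc k)) (\<lambda>t. W (t - ts k))"
    using duhamel_shift[OF mild_sol_duhamel[OF W], of "ts (Suc k) - ts k" "ts k"] less[of k] by simp
  then show ?thesis
    by (rule duhamel_cong) (use phi0_W sw(4) in auto)
qed

lemma phi0_duhamel:
  assumes "\<sigma> \<in> PC" "0 \<le> b"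
  shows "duhamel T (\<lambda>r. f (\<sigma> r) (phi0 T f K r y \<sigma>, K (phi0 T f K r y \<sigma>))) 0 b (\<lambda>t. phi0 T f K t y \<sigma>)"
proof -
  define ts where "ts = (SOME ts. switching_seq \<sigma> ts)"
  note sw = switching_seqD[OF switching_seq_some[OF assms(1)], folded ts_def]
  have "ts k \<le> ts (Suc k)" for k using sw(2) by (simp add: strict_mono_less_eq)
  then have concat: "duhamel T (\<lambda>r. f (\<sigma> r) (phi0 T f K r y \<sigma>, K (phi0 T f K r y \<sigma>)))
      (ts 0) (ts n) (\<lambda>t. phi0 T f K t y \<sigma>)" for n
    by (rule duhamel_concat[where s=ts, OF _ phi0_duhamel_piece[OF assms(1) ts_def]])
  obtain n where "b \<le> ts n" using ex_ge_if_filterlim_at_top[OF sw(3)] by blast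
  then show ?thesis using duhamel_subinterval[OF concat[of n], of 0 b] sw(1) by simp
qed

lemma
  assumes "sd_sol T f K s x0 \<sigma> x"
  shows sd_sol_continuous: "continuous_on {0..} x"
    and sd_sol_initial: "x 0 = x0"
    and sd_solD: "t \<in> {s k..<s (Suc k)} \<Longrightarrow> x t = T (t - s k) (x (s k)) +
      integral {0..t - s k} (\<lambda>r. T (t - s k - r) (f (\<sigma> (r + s k)) (x (r + s k), K (T r (x (s k))))))"
  using assms unfolding sd_sol_def by blast+

lemma sampled_duhamel:
  assumes s: "sampling_seq s"
    and piece: "\<And>k. duhamel T (\<lambda>r. f (\<sigma> r) (x r, K (T (r - s k) (x (s k))))) (s k) (s (Suc k)) x"
  shows "duhamel T (\<lambda>r. f (\<sigma> r) (x r, sampled_input T K s x r)) 0 (s n) x"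
proof -
  have "s k \<le> s (Suc k)" for k using sampling_seqD(4)[OF s, of k] by simp
  moreover have "duhamel T (\<lambda>r. f (\<sigma> r) (x r, sampled_input T K s x r)) (s k) (s (Suc k)) x" for k
  proof (rule duhamel_cong[OF piece])
    fix r assume "r \<in> {s k..<s (Suc k)}"
    then show "f (\<sigma> r) (x r, K (T (r - s k) (x (s k)))) = f (\<sigma> r) (x r, sampled_input T K s x r)"
      using sample_index_eq[OF s, of k r] by (simp add: sampled_input_def)
  qed simp
  ultimately have "duhamel T (\<lambda>r. f (\<sigma> r) (x r, sampled_input T K s x r)) (s 0) (s n) x"
    by (rule duhamel_concat)
  then show ?thesis using sampling_seqD(1)[OF s] by simp
qed

lemma sd_sol_duhamel_piece:
  assumes x: "sd_sol T f K s x0 \<sigma> x" and s: "sampling_seq s" and "\<sigma> \<in> PC"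
  shows "duhamel T (\<lambda>r. f (\<sigma> r) (x r, K (T (r - s k) (x (s k))))) (s k) (s (Suc k)) x"
proof (rule duhamel_if_half_open)
  obtain ts where ts: "switching_seq \<sigma> ts" using \<open>\<sigma> \<in> PC\<close> by (auto simp: PC_def)
  show "s k < s (Suc k)" by (rule sampling_seqD(4)[OF s])
  show cont: "continuous_on {s k..s (Suc k)} x"
    using sd_sol_continuous[OF x] by (rule continuous_on_subset) (use sampling_seqD(5)[OF s] in auto)
  show "(\<lambda>r. T (- r) (f (\<sigma> r) (x r, K (T (r - s k) (x (s k)))))) integrable_on {s k..s (Suc k)}"
    using ts sampling_seqD(5)[OF s] cont
    by (intro integrable_on_switched_f continuous_intros continuous_on_T_orbit)
  show "x t = T (t - s k) (x (s k)) + integral {s k..t} (\<lambda>r. T (t - r) (f (\<sigma> r) (x r, K (T (r - s k) (x (s k))))))"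
    if "t \<in> {s k..<s (Suc k)}" for t
    using sd_solD[OF x that]
      integral_shift_convolution[of t "s k" "\<lambda>r. f (\<sigma> r) (x r, K (T (r - s k) (x (s k))))"]
    by simp
qed

lemma sd_sol_duhamel:
  "sd_sol T f K s x0 \<sigma> x \<Longrightarrow> sampling_seq s \<Longrightarrow> \<sigma> \<in> PC \<Longrightarrow>
    duhamel T (\<lambda>r. f (\<sigma> r) (x r, sampled_input T K s x r)) 0 (s n) x"
  by (rule sampled_duhamel[OF _ sd_sol_duhamel_piece])

lemma sd_sol_if_pieces:
  assumes s: "sampling_seq s" and "x 0 = x0"
    and piece: "\<And>k. duhamel T (\<lambda>r. f (\<sigma> r) (x r, K (T (r - s k) (x (s k))))) (s k) (s (Suc k)) x"
  shows "sd_sol T f K s x0 \<sigma> x"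
  unfolding sd_sol_def
proof (intro conjI allI ballI)
  show "continuous_on {0..} x"
  proof (rule continuous_on_atLeast_if_atLeastAtMost)
    fix c :: real
    obtain n where "c \<le> s n" using ex_ge_if_filterlim_at_top[OF sampling_seqD(3)[OF s]] by blast
    have "continuous_on {0..s n} x" by (rule continuous_on_duhamel[OF sampled_duhamel[OF s piece]])
    then show "continuous_on {0..c} x" by (rule continuous_on_subset) (use \<open>c \<le> s n\<close> in auto)
  qed
  show "x 0 = x0" by fact
  fix k t assume t: "t \<in> {s k..<s (Suc k)}"
  then show "x t = T (t - s k) (x (s k)) + integral {0..t - s k}
      (\<lambda>r. T (t - s k - r) (f (\<sigma> (r + s k)) (x (r + s k), K (T r (x (s k))))))"
    using duhamelD[OF piece, of t k]
      integral_shift_convolution[of t "s k" "\<lambda>r. f (\<sigma> r) (x r, K (T (r - s k) (x (s k))))"]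
    by simp
qed

lemma sd_sol_unique:
  assumes x: "sd_sol T f K s x0 \<sigma> x" and z: "sd_sol T f K s x0 \<sigma> z"
    and s: "sampling_seq s" and \<sigma>: "\<sigma> \<in> PC" and "0 \<le> t"
  shows "x t = z t"
proof -
  have piece: "x r = z r" if "x (s k) = z (s k)" "r \<in> {s k..s (Suc k)}" for k r
  proof (rule duhamel_unique[where G="\<lambda>r w. f (\<sigma> r) (w, K (T (r - s k) (x (s k))))" and L=Lf
        and a="s k" and b="s (Suc k)"])
    show "duhamel T (\<lambda>r. f (\<sigma> r) (x r, K (T (r - s k) (x (s k))))) (s k) (s (Suc k)) x"
      by (rule sd_sol_duhamel_piece[OF x s \<sigma>])
    show "duhamel T (\<lambda>r. f (\<sigma> r) (z r, K (T (r - s k) (x (s k))))) (s k) (s (Suc k)) z"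
      using sd_sol_duhamel_piece[OF z s \<sigma>, of k] that(1) by simp
  qed (use that Lf norm_f_diff_state_le in auto)
  have samples: "x (s k) = z (s k)" for k
  proof (induction k)
    case 0
    show ?case using sd_sol_initial[OF x] sd_sol_initial[OF z] sampling_seqD(1)[OF s] by simp
  next
    case (Suc k)
    show ?case using piece[OF Suc, of "s (Suc k)"] sampling_seqD(4)[OF s, of k] by simp
  qed
  then show ?thesis
    using piece[of "sample_index s t" t, OF samples] sample_index[OF s \<open>0 \<le> t\<close>] by simp
qed

lemma sampled_piece_exists:
  assumes s: "sampling_seq s" and "\<sigma> \<in> PC"
  shows "\<exists>w. w (s k) = y \<and> duhamel T (\<lambda>r. f (\<sigma> r) (w r, K (T (r - s k) y))) (s k) (s (Suc k)) w"
proof (rule duhamel_exists[where G="\<lambda>r w. f (\<sigma> r) (w, K (T (r - s k) y))" and L=Lf])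
  obtain ts where ts: "switching_seq \<sigma> ts" using \<open>\<sigma> \<in> PC\<close> by (auto simp: PC_def)
  show "(\<lambda>r. T (- r) (f (\<sigma> r) (w r, K (T (r - s k) y)))) integrable_on {s k..s (Suc k)}"
    if "continuous_on {s k..s (Suc k)} w" for w
    using ts sampling_seqD(5)[OF s] that
    by (intro integrable_on_switched_f continuous_intros continuous_on_T_orbit)
qed (use Lf sampling_seqD(4)[OF s, of k] norm_f_diff_state_le in auto)

lemma sd_sol_exists:
  assumes s: "sampling_seq s" and \<sigma>: "\<sigma> \<in> PC"
  shows "\<exists>x. sd_sol T f K s x0 \<sigma> x"
proof -
  obtain Sol where Sol0: "\<And>k y. Sol k y (s k) = y"
    and Sol: "\<And>k y. duhamel T (\<lambda>r. f (\<sigma> r) (Sol k y r, K (T (r - s k) y))) (s k) (s (Suc k)) (Sol k y)"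
    using sampled_piece_exists[OF s \<sigma>] by metis
  define ys where "ys = rec_nat x0 (\<lambda>k y. Sol k y (s (Suc k)))"
  define x where "x t = Sol (sample_index s t) (ys (sample_index s t)) t" for t
  have x_Sol: "x t = Sol k (ys k) t" if t: "t \<in> {s k..s (Suc k)}" for k t
  proof (cases "t < s (Suc k)")
    case True
    then show ?thesis using sample_index_eq[OF s, of k t] t by (simp add: x_def)
  next
    case False
    then have "t = s (Suc k)" using t by simp
    then have "sample_index s t = Suc k"
      using sample_index_eq[OF s, of "Suc k" t] sampling_seqD(4)[OF s, of "Suc k"] by simp
    then show ?thesis using Sol0 \<open>t = s (Suc k)\<close> by (simp add: x_def ys_def)
  qed
  have x_sample: "x (s k) = ys k" for k
    using x_Sol[of "s k" k] Sol0 sampling_seqD(4)[OF s, of k] by simp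
  have "sd_sol T f K s x0 \<sigma> x"
  proof (rule sd_sol_if_pieces[OF s])
    show "x 0 = x0" using x_sample[of 0] sampling_seqD(1)[OF s] by (simp add: ys_def)
    show "duhamel T (\<lambda>r. f (\<sigma> r) (x r, K (T (r - s k) (x (s k))))) (s k) (s (Suc k)) x" for k
      by (rule duhamel_cong[OF Sol[of k "ys k"]]) (simp_all add: x_Sol[of _ k] x_sample)
  qed
  then show ?thesis by blast
qed

lemma phiS_eq:
  assumes x: "sd_sol T f K s x0 \<sigma> x" and s: "sampling_seq s" and \<sigma>: "\<sigma> \<in> PC" and "0 \<le> t"
  shows "phiS T f K s t x0 \<sigma> = x t"
  unfolding phiS_def
proof (rule the_zero_extension_eq[where P="sd_sol T f K s x0 \<sigma>", OF x _ _ \<open>0 \<le> t\<close>])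
  show "sd_sol T f K s x0 \<sigma> (\<lambda>t. if t < 0 then 0 else x t)"
  proof (rule sd_sol_if_pieces[OF s])
    show "(if 0 < (0::real) then 0 else x 0) = x0" using sd_sol_initial[OF x] by simp
    show "duhamel T (\<lambda>r. f (\<sigma> r) ((if r < 0 then 0 else x r),
        K (T (r - s k) (if s k < 0 then 0 else x (s k))))) (s k) (s (Suc k)) (\<lambda>t. if t < 0 then 0 else x t)"
      for k
      using sampling_seqD(5)[OF s, of k]
      by (intro duhamel_cong[OF sd_sol_duhamel_piece[OF x s \<sigma>, of k]]) auto
  qed
qed (blast intro: sd_sol_unique[OF _ _ s \<sigma>])

end

section \<open>Exponential stability under fast sampling\<close>

context closed_loop_system
begin

lemma norm_f_perturbed_input_le:
  assumes "norm (u - K x) \<le> \<epsilon>"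
  shows "norm (f q (x, u) - f q (z, K z)) \<le> Lf * (1 + LK) * norm (x - z) + Lf * \<epsilon>"
proof -
  have "norm (u - K z) \<le> norm (u - K x) + norm (K x - K z)"
    by (rule norm_diff_triangle_le[where y="K x"]) simp_all
  also have "\<dots> \<le> \<epsilon> + LK * norm (x - z)"
    using assms norm_K_diff_le[of x z] by (rule add_mono)
  finally have "Lf * (norm (x - z) + norm (u - K z)) \<le> Lf * (norm (x - z) + (\<epsilon> + LK * norm (x - z)))"
    using Lf by (simp add: mult_left_mono)
  then show ?thesis
    using norm_f_diff_le[of q x u z "K z"] by (simp add: algebra_simps)
qed

lemma closed_loop_perturbation_le:
  assumes "a \<le> e" and C: "C \<ge> 0" "\<And>s v. s \<in> {0..e - a} \<Longrightarrow> norm (T s v) \<le> C * norm v"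
    and x: "duhamel T (\<lambda>r. f (\<sigma> r) (x r, u r)) a e x"
    and z: "duhamel T (\<lambda>r. f (\<sigma> r) (z r, K (z r))) a e z" and "z a = x a"
    and u: "\<And>r. r \<in> {a..e} \<Longrightarrow> norm (u r - K (x r)) \<le> \<epsilon>"
    and t: "t \<in> {a..e}"
  shows "norm (x t - z t) \<le> C * Lf * (e - a) * exp (C * Lf * (1 + LK) * (e - a)) * \<epsilon>"
proof -
  define \<phi> where "\<phi> r = norm (x r - z r)" for r
  define A where "A = C * Lf * (1 + LK)"
  have \<phi>: "continuous_on {a..e} \<phi>"
    unfolding \<phi>_def using continuous_on_duhamel[OF x] continuous_on_duhamel[OF z]
    by (intro continuous_intros)
  have "norm (u a - K (x a)) \<le> \<epsilon>" using u \<open>a \<le> e\<close> by simp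
  then have \<epsilon>: "\<epsilon> \<ge> 0" using norm_ge_zero order_trans by blast
  have A: "A \<ge> 0" using C Lf LK_nonneg by (simp add: A_def)
  have le: "\<phi> s \<le> C * Lf * \<epsilon> * (e - a) + A * integral {a..s} \<phi>" if s: "s \<in> {a..e}" for s
  proof -
    have int_\<phi>: "\<phi> integrable_on {a..s}"
      using s by (intro integrable_continuous_real continuous_on_subset[OF \<phi>]) auto
    have "\<phi> s = norm (integral {a..s} (\<lambda>r. T (s - r) (f (\<sigma> r) (x r, u r) - f (\<sigma> r) (z r, K (z r)))))"
      using duhamel_diff[OF x z s] \<open>z a = x a\<close> by (simp add: \<phi>_def)
    also have "\<dots> \<le> C * integral {a..s} (\<lambda>r. Lf * (1 + LK) * \<phi> r + Lf * \<epsilon>)"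
      using int_\<phi> C s u unfolding \<phi>_def
      by (intro norm_integral_T_convolution_le[OF duhamel_diff_integrable[OF x z s]]
          integrable_add integrable_on_mult_right integrable_const_ivl norm_f_perturbed_input_le) auto
    also have "\<dots> = C * (Lf * (1 + LK) * integral {a..s} \<phi> + Lf * \<epsilon> * (s - a))"
      using int_\<phi> s by (subst integral_affine_real) auto
    also have "\<dots> = C * Lf * \<epsilon> * (s - a) + A * integral {a..s} \<phi>"
      by (simp add: A_def algebra_simps)
    also have "\<dots> \<le> C * Lf * \<epsilon> * (e - a) + A * integral {a..s} \<phi>"
      using s C Lf \<epsilon> by (intro add_right_mono mult_left_mono) auto
    finally show ?thesis .
  qed
  have "\<phi> t \<le> C * Lf * \<epsilon> * (e - a) * exp (A * (t - a))"
    by (rule gronwall[OF \<phi> A le t])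
  also have "\<dots> \<le> C * Lf * \<epsilon> * (e - a) * exp (A * (e - a))"
    using t A C Lf \<epsilon> by (intro mult_left_mono) (auto intro: mult_left_mono)
  finally show ?thesis by (simp add: \<phi>_def A_def mult_ac)
qed

text \<open>If the input error is at most \<open>\<eta>\<close> times the size of the trajectory and \<open>\<Gamma> \<eta> \<le> 1/2\<close>,
  the perturbation can be absorbed into the left-hand side.\<close>

lemma closed_loop_perturbation_bound:
  assumes "a \<le> e" and C: "C \<ge> 0" "\<And>s v. s \<in> {0..e - a} \<Longrightarrow> norm (T s v) \<le> C * norm v"
    and x: "duhamel T (\<lambda>r. f (\<sigma> r) (x r, u r)) a e x"
    and z: "duhamel T (\<lambda>r. f (\<sigma> r) (z r, K (z r))) a e z" and "z a = x a"
    and z_le: "\<And>r. r \<in> {a..e} \<Longrightarrow> norm (z r) \<le> M * norm (x a)"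
    and u: "\<And>X r. \<forall>\<rho>\<in>{a..e}. norm (x \<rho>) \<le> X \<Longrightarrow> r \<in> {a..e} \<Longrightarrow> norm (u r - K (x r)) \<le> \<eta> * X"
    and \<Gamma>: "C * Lf * (e - a) * exp (C * Lf * (1 + LK) * (e - a)) \<le> \<Gamma>" and "\<eta> \<ge> 0" "\<Gamma> * \<eta> \<le> 1 / 2"
  shows "\<And>r. r \<in> {a..e} \<Longrightarrow> norm (x r) \<le> 2 * M * norm (x a)"
    and "\<And>r. r \<in> {a..e} \<Longrightarrow> norm (x r - z r) \<le> 2 * \<Gamma> * \<eta> * M * norm (x a)"
proof -
  obtain r0 where r0: "r0 \<in> {a..e}" "\<And>r. r \<in> {a..e} \<Longrightarrow> norm (x r) \<le> norm (x r0)"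
    using continuous_attains_sup[OF compact_Icc _ continuous_on_norm[OF continuous_on_duhamel[OF x]]]
      \<open>a \<le> e\<close> by auto
  define X where "X = norm (x r0)"
  have "0 \<le> C * Lf * (e - a) * exp (C * Lf * (1 + LK) * (e - a))"
    using C Lf \<open>a \<le> e\<close> by simp
  then have \<Gamma>\<eta>: "0 \<le> \<Gamma> * \<eta>" using \<Gamma> \<open>\<eta> \<ge> 0\<close> by simp
  have dist: "norm (x r - z r) \<le> \<Gamma> * \<eta> * X" if "r \<in> {a..e}" for r
  proof -
    have "norm (x r - z r) \<le> C * Lf * (e - a) * exp (C * Lf * (1 + LK) * (e - a)) * (\<eta> * X)"
      using r0 by (intro closed_loop_perturbation_le[OF \<open>a \<le> e\<close> C x z \<open>z a = x a\<close> u that])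
        (auto simp: X_def)
    also have "\<dots> \<le> \<Gamma> * (\<eta> * X)"
      using \<Gamma> \<open>\<eta> \<ge> 0\<close> by (intro mult_right_mono) (auto simp: X_def)
    finally show ?thesis by (simp add: mult.assoc)
  qed
  have "X \<le> norm (z r0) + norm (x r0 - z r0)"
    unfolding X_def using norm_triangle_ineq[of "z r0" "x r0 - z r0"] by simp
  also have "\<dots> \<le> M * norm (x a) + \<Gamma> * \<eta> * X" using z_le[OF r0(1)] dist[OF r0(1)] by simp
  also have "\<Gamma> * \<eta> * X \<le> X / 2"
    using mult_right_mono[OF \<open>\<Gamma> * \<eta> \<le> 1 / 2\<close>, of X] by (simp add: X_def)
  finally have X: "X \<le> 2 * M * norm (x a)" by simp
  show "norm (x r) \<le> 2 * M * norm (x a)" if "r \<in> {a..e}" for r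
    using r0(2)[OF that] X by (simp add: X_def)
  show "norm (x r - z r) \<le> 2 * \<Gamma> * \<eta> * M * norm (x a)" if "r \<in> {a..e}" for r
    using dist[OF that] mult_left_mono[OF X \<Gamma>\<eta>] by (simp add: mult_ac)
qed

lemma sample_drift_le:
  assumes x: "sd_sol T f K s x0 \<sigma> x" and s: "sampling_seq s" and \<sigma>: "\<sigma> \<in> PC"
    and gaps: "\<And>k. s (Suc k) - s k \<le> \<delta>"
    and C: "C \<ge> 0" "\<And>t v. t \<in> {0..\<delta>} \<Longrightarrow> norm (T t v) \<le> C * norm v"
    and r: "r \<in> {s j..e}" and X: "\<forall>\<rho>\<in>{s j..e}. norm (x \<rho>) \<le> X"
    and i: "i = sample_index s r"
  shows "norm (x r - T (r - s i) (x (s i))) \<le> C * Lf * (1 + LK * C) * \<delta> * X"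
proof -
  have i_le: "s i \<le> r" "r < s (Suc i)"
    using sample_index[OF s] r sampling_seqD(5)[OF s, of j] i by auto
  then have "j \<le> i" using r sampling_seqD(6)[OF s, of "Suc i" j] by (meson atLeastAtMost_iff not_less_eq_eq order.trans not_le)
  then have si: "s i \<in> {s j..e}" using sampling_seqD(6)[OF s] i_le r by auto
  have X0: "X \<ge> 0" using X r norm_ge_zero order_trans by blast
  have d: "r - s i \<le> \<delta>" using gaps[of i] i_le by linarith
  let ?F = "\<lambda>\<rho>. f (\<sigma> \<rho>) (x \<rho>, K (T (\<rho> - s i) (x (s i))))"
  have piece: "duhamel T ?F (s i) (s (Suc i)) x" by (rule sd_sol_duhamel_piece[OF x s \<sigma>])
  have "norm (x r - T (r - s i) (x (s i))) = norm (integral {s i..r} (\<lambda>\<rho>. T (r - \<rho>) (?F \<rho>)))"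
    using duhamelD[OF piece, of r] i_le by simp
  also have "\<dots> \<le> C * integral {s i..r} (\<lambda>\<rho>. Lf * (1 + LK * C) * X)"
  proof (rule norm_integral_T_convolution_le)
    show "(\<lambda>\<rho>. T (- \<rho>) (?F \<rho>)) integrable_on {s i..r}"
      using duhamel_integrable[OF piece] i_le by auto
    fix \<rho> assume \<rho>: "\<rho> \<in> {s i..r}"
    then have "norm (x \<rho>) \<le> X" "norm (x (s i)) \<le> X" using X si r by auto
    moreover have "norm (T (\<rho> - s i) (x (s i))) \<le> C * norm (x (s i))" using C(2) \<rho> d by auto
    ultimately have "norm (K (T (\<rho> - s i) (x (s i)))) \<le> LK * (C * X)"
      using norm_K_le[of "T (\<rho> - s i) (x (s i))"] LK_nonneg C(1)
      by (meson mult_left_mono order_trans)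
    then have "norm (?F \<rho>) \<le> Lf * (X + LK * (C * X))"
      using norm_f_le[of "\<sigma> \<rho>" "x \<rho>" "K (T (\<rho> - s i) (x (s i)))"] \<open>norm (x \<rho>) \<le> X\<close> Lf
      by (meson add_mono less_imp_le mult_left_mono order_trans)
    then show "norm (?F \<rho>) \<le> Lf * (1 + LK * C) * X" by (simp add: algebra_simps)
  qed (use C d in auto)
  also have "\<dots> = C * (Lf * (1 + LK * C) * X) * (r - s i)" using i_le by simp
  also have "\<dots> \<le> C * (Lf * (1 + LK * C) * X) * \<delta>"
    using d C Lf LK_nonneg X0 by (intro mult_left_mono) auto
  finally show ?thesis by (simp add: mult_ac)
qed

lemma sampled_input_error_le:
  assumes x: "sd_sol T f K s x0 \<sigma> x" and s: "sampling_seq s" and \<sigma>: "\<sigma> \<in> PC"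
    and gaps: "\<And>k. s (Suc k) - s k \<le> \<delta>"
    and C: "C \<ge> 0" "\<And>t v. t \<in> {0..\<delta>} \<Longrightarrow> norm (T t v) \<le> C * norm v"
    and r: "r \<in> {s j..e}" and X: "\<forall>\<rho>\<in>{s j..e}. norm (x \<rho>) \<le> X"
  shows "norm (sampled_input T K s x r - K (x r)) \<le> LK * C * Lf * (1 + LK * C) * \<delta> * X"
proof -
  let ?i = "sample_index s r"
  have "norm (sampled_input T K s x r - K (x r)) \<le> LK * norm (x r - T (r - s ?i) (x (s ?i)))"
    using norm_K_diff_le[of "T (r - s ?i) (x (s ?i))" "x r"]
    by (simp add: sampled_input_def norm_minus_commute)
  also have "\<dots> \<le> LK * (C * Lf * (1 + LK * C) * \<delta> * X)"
    using sample_drift_le[OF assms refl] LK_nonneg by (rule mult_left_mono)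
  finally show ?thesis by (simp add: mult_ac)
qed

end

lemma half_power_le_exp:
  fixes W t :: real
  assumes "W > 0" and "t \<le> (real n + 1) * W"
  shows "(1 / 2) ^ n \<le> 2 * exp (- (ln 2 / W) * t)"
proof -
  have "(1 / 2 :: real) ^ n = exp (- (real n * ln 2))"
    by (simp add: exp_minus exp_of_nat_mult power_one_over inverse_eq_divide)
  also have "\<dots> \<le> exp (ln 2 - (ln 2 / W) * t)"
  proof -
    have "t / W \<le> real n + 1" using assms by (simp add: divide_le_eq)
    then have "ln 2 * (t / W) \<le> ln 2 * (real n + 1)" by (intro mult_left_mono) auto
    then show ?thesis by (simp add: algebra_simps)
  qed
  also have "\<dots> = 2 * exp (- (ln 2 / W) * t)" by (simp add: exp_diff exp_minus field_simps)
  finally show ?thesis .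
qed

context closed_loop_system
begin

lemma phi0_shift_duhamel:
  assumes "\<sigma> \<in> PC" "0 \<le> a" "a \<le> e"
  shows "duhamel T (\<lambda>r. f (\<sigma> r) (phi0 T f K (r - a) y (\<lambda>t. \<sigma> (t + a)),
      K (phi0 T f K (r - a) y (\<lambda>t. \<sigma> (t + a))))) a e (\<lambda>t. phi0 T f K (t - a) y (\<lambda>t. \<sigma> (t + a)))"
  using duhamel_shift[OF phi0_duhamel[OF PC_shift[OF assms(1,2)], of "e - a" y], of a] assms(3)
  by simp

end

text \<open>The data of the argument: \<open>\<tau>\<close> is a time after which the closed loop has contracted by
  \<open>1/4\<close>, \<open>C\<close> bounds the group on \<open>[0, \<tau> + 1]\<close>, \<open>\<Gamma>\<close> is the Gronwall constant of a window
  of length at most \<open>\<tau> + 1\<close>, and \<open>\<eta>\<close> bounds the relative error of the sampled input.\<close>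

locale sampled_data_stability = closed_loop_system T f K Lf LK
  for T :: "real \<Rightarrow> 'x::banach \<Rightarrow> 'x" and f :: "'q \<Rightarrow> 'x \<times> 'u::banach \<Rightarrow> 'x" and K Lf LK +
  fixes s :: "nat \<Rightarrow> real" and M lam \<tau> C \<delta> \<Gamma> \<eta> :: real
  assumes sampling: "sampling_seq s"
    and M: "M > 0" and lam: "lam > 0"
    and phi0_decay: "\<And>t y \<sigma>. 0 \<le> t \<Longrightarrow> \<sigma> \<in> PC \<Longrightarrow> norm (phi0 T f K t y \<sigma>) \<le> M * exp (- lam * t) * norm y"
    and \<tau>: "\<tau> \<ge> 1" "M * exp (- lam * \<tau>) \<le> 1 / 4"
    and C: "C \<ge> 1" "\<And>t v. t \<in> {0..\<tau> + 1} \<Longrightarrow> norm (T t v) \<le> C * norm v"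
    and gaps: "\<And>k. s (Suc k) - s k \<le> \<delta>" and \<delta>: "\<delta> \<le> 1"
    and \<Gamma>: "C * Lf * (\<tau> + 1) * exp (C * Lf * (1 + LK) * (\<tau> + 1)) \<le> \<Gamma>"
    and \<eta>: "LK * C * Lf * (1 + LK * C) * \<delta> \<le> \<eta>"
    and small: "\<Gamma> * \<eta> \<le> 1 / 2" "8 * \<Gamma> * \<eta> * M \<le> 1"
begin

lemma \<delta>_nonneg: "\<delta> \<ge> 0"
  using gaps[of 0] sampling_seqD(4)[OF sampling, of 0] by simp

lemma \<eta>_nonneg: "\<eta> \<ge> 0"
proof -
  have "0 \<le> LK * C * Lf * (1 + LK * C) * \<delta>" using C Lf LK_nonneg \<delta>_nonneg by simp
  then show ?thesis using \<eta> by linarith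
qed

lemma \<Gamma>_window:
  assumes "0 \<le> d" "d \<le> \<tau> + 1"
  shows "C * Lf * d * exp (C * Lf * (1 + LK) * d) \<le> \<Gamma>"
proof -
  have "C * Lf * d * exp (C * Lf * (1 + LK) * d) \<le> C * Lf * (\<tau> + 1) * exp (C * Lf * (1 + LK) * (\<tau> + 1))"
    using assms C Lf LK_nonneg \<tau> by (intro mult_mono mult_left_mono) auto
  then show ?thesis using \<Gamma> by linarith
qed

lemma phi0_shift_le:
  assumes "\<sigma> \<in> PC" "0 \<le> a" "0 \<le> d" "d \<le> r - a"
  shows "norm (phi0 T f K (r - a) y (\<lambda>t. \<sigma> (t + a))) \<le> M * exp (- lam * d) * norm y"
proof -
  have "norm (phi0 T f K (r - a) y (\<lambda>t. \<sigma> (t + a))) \<le> M * exp (- lam * (r - a)) * norm y"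
    using phi0_decay PC_shift[OF assms(1,2)] assms(3,4) by simp
  also have "\<dots> \<le> M * exp (- lam * d) * norm y"
    using mult_left_mono[OF assms(4), of lam] lam M by (intro mult_right_mono mult_left_mono) auto
  finally show ?thesis .
qed

lemma sampled_input_relative_error_le:
  assumes x: "sd_sol T f K s x0 \<sigma> x" and \<sigma>: "\<sigma> \<in> PC"
    and X: "\<forall>\<rho>\<in>{s j..e}. norm (x \<rho>) \<le> X" and r: "r \<in> {s j..e}"
  shows "norm (sampled_input T K s x r - K (x r)) \<le> \<eta> * X"
proof -
  have "0 \<le> X" using X r norm_ge_zero order_trans by blast
  have "norm (sampled_input T K s x r - K (x r)) \<le> LK * C * Lf * (1 + LK * C) * \<delta> * X"
    using X r \<delta> \<tau> C by (intro sampled_input_error_le[OF x sampling \<sigma> gaps]) auto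
  also have "\<dots> \<le> \<eta> * X" using \<eta> \<open>0 \<le> X\<close> by (rule mult_right_mono)
  finally show ?thesis .
qed

lemma window_halving:
  assumes x: "sd_sol T f K s x0 \<sigma> x" and \<sigma>: "\<sigma> \<in> PC"
    and j: "j \<le> j'" "s j + \<tau> \<le> s j'" "s j' \<le> s j + \<tau> + 1"
  shows "\<And>r. r \<in> {s j..s j'} \<Longrightarrow> norm (x r) \<le> 2 * M * norm (x (s j))"
    and "norm (x (s j')) \<le> norm (x (s j)) / 2"
proof -
  let ?a = "s j" and ?e = "s j'"
  define z where "z = (\<lambda>t. phi0 T f K (t - ?a) (x ?a) (\<lambda>t. \<sigma> (t + ?a)))"
  have a: "0 \<le> ?a" "?a \<le> ?e" "\<tau> \<le> ?e - ?a" "?e - ?a \<le> \<tau> + 1"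
    using sampling_seqD(5)[OF sampling] j \<tau> by auto
  have Ce: "norm (T t v) \<le> C * norm v" if "t \<in> {0..?e - ?a}" for t v using C(2) that a by auto
  have z: "duhamel T (\<lambda>r. f (\<sigma> r) (z r, K (z r))) ?a ?e z"
    unfolding z_def by (rule phi0_shift_duhamel[OF \<sigma> a(1,2)])
  have "z ?a = x ?a" using phi0_zero_time[OF PC_shift[OF \<sigma> a(1)]] by (simp add: z_def)
  have x_duhamel: "duhamel T (\<lambda>r. f (\<sigma> r) (x r, sampled_input T K s x r)) ?a ?e x"
    using duhamel_subinterval[OF sd_sol_duhamel[OF x sampling \<sigma>, of j'], of ?a ?e] a by simp
  have z_le: "norm (z r) \<le> M * norm (x ?a)" if "r \<in> {?a..?e}" for r
    using phi0_shift_le[OF \<sigma> a(1), where d=0 and r=r] that by (simp add: z_def)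
  have "0 \<le> C" using C(1) by simp
  note bound = closed_loop_perturbation_bound[OF a(2) this Ce x_duhamel z \<open>z ?a = x ?a\<close> z_le
      sampled_input_relative_error_le[OF x \<sigma>] \<Gamma>_window \<eta>_nonneg small(1)]
  show "norm (x r) \<le> 2 * M * norm (x ?a)" if "r \<in> {?a..?e}" for r
    using bound(1) a that by simp
  have "norm (z ?e) \<le> M * exp (- lam * \<tau>) * norm (x ?a)"
    using phi0_shift_le[OF \<sigma> a(1), where d=\<tau> and r="?e"] a \<tau> by (simp add: z_def)
  also have "\<dots> \<le> norm (x ?a) / 4" using mult_right_mono[OF \<tau>(2) norm_ge_zero] by simp
  finally have "norm (z ?e) \<le> norm (x ?a) / 4" .
  moreover have "norm (x ?e - z ?e) \<le> norm (x ?a) / 4"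
  proof -
    have "norm (x ?e - z ?e) \<le> 2 * \<Gamma> * \<eta> * M * norm (x ?a)"
      using bound(2) a by simp
    also have "\<dots> \<le> norm (x ?a) / 4"
      using mult_right_mono[OF small(2) norm_ge_zero, of "x ?a"] by simp
    finally show ?thesis .
  qed
  ultimately show "norm (x ?e) \<le> norm (x ?a) / 2"
    using norm_triangle_ineq[of "z ?e" "x ?e - z ?e"] by simp
qed

lemma exists_next_window: "\<exists>j'. j \<le> j' \<and> s j + \<tau> \<le> s j' \<and> s j' \<le> s j + \<tau> + 1"
proof -
  define m where "m = (LEAST i. s j + \<tau> \<le> s i)"
  obtain i where "s j + \<tau> \<le> s i"
    using ex_ge_if_filterlim_at_top[OF sampling_seqD(3)[OF sampling]] by blast
  then have m: "s j + \<tau> \<le> s m" unfolding m_def by (rule LeastI)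
  have "j < m"
  proof (rule ccontr)
    assume "\<not> j < m"
    then have "s m \<le> s j" using sampling_seqD(6)[OF sampling] by simp
    then show False using m \<tau> by simp
  qed
  then obtain m' where m': "m = Suc m'" "j \<le> m'" by (cases m) auto
  have "m' < m" using m' by simp
  then have "\<not> s j + \<tau> \<le> s m'" unfolding m_def by (rule not_less_Least)
  then have "s m \<le> s j + \<tau> + 1" using gaps[of m'] \<delta> m' by simp
  then show ?thesis using m m' by (intro exI[of _ m]) simp
qed

lemma window_sequence:
  obtains J where "J 0 = 0" and "\<And>n. J n \<le> J (Suc n)"
    and "\<And>n. s (J n) + \<tau> \<le> s (J (Suc n))" and "\<And>n. s (J (Suc n)) \<le> s (J n) + \<tau> + 1"
proof -
  obtain next_window where
    "\<And>j. j \<le> next_window j \<and> s j + \<tau> \<le> s (next_window j) \<and> s (next_window j) \<le> s j + \<tau> + 1"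
    using exists_next_window by metis
  then show ?thesis using that[of "\<lambda>n. (next_window ^^ n) 0"] by simp
qed

lemma window_index:
  assumes J: "J 0 = 0" "\<And>n. s (J n) + \<tau> \<le> s (J (Suc n))" "\<And>n. s (J (Suc n)) \<le> s (J n) + \<tau> + 1"
    and t: "0 \<le> t"
  obtains n where "s (J n) \<le> t" "t < s (J (Suc n))" "t \<le> (real n + 1) * (\<tau> + 1)"
proof -
  define g where "g n = s (J n)" for n
  have g0: "g 0 = 0" using sampling_seqD(1)[OF sampling] J(1) by (simp add: g_def)
  have "g n < g (Suc n)" for n using J(2)[of n] \<tau>(1) unfolding g_def by linarith
  then have "strict_mono g" by (rule strict_mono_Suc_iff[THEN iffD2, rule_format])
  moreover have "real n \<le> g n" for n
  proof (induction n)
    case 0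
    show ?case using g0 by simp
  next
    case (Suc n)
    then show ?case using J(2)[of n] \<tau>(1) by (simp add: g_def)
  qed
  then have "filterlim g at_top sequentially"
    by (intro filterlim_at_top_mono[OF filterlim_real_sequentially]) auto
  ultimately obtain n where n: "g n \<le> t" "t < g (Suc n)"
    using unique_interval_index[of g t] g0 t by auto
  have g_le: "g n \<le> real n * (\<tau> + 1)" for n
  proof (induction n)
    case 0
    show ?case using g0 by simp
  next
    case (Suc n)
    then show ?case using J(3)[of n] by (simp add: g_def algebra_simps)
  qed
  then have "t \<le> (real n + 1) * (\<tau> + 1)" using n(2) g_le[of "Suc n"] by (simp add: add.commute)
  then show ?thesis using that n by (simp add: g_def)
qed

lemma sd_sol_decay:
  assumes x: "sd_sol T f K s x0 \<sigma> x" and \<sigma>: "\<sigma> \<in> PC" and t: "0 \<le> t"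
  shows "norm (x t) \<le> 4 * M * exp (- (ln 2 / (\<tau> + 1)) * t) * norm x0"
proof -
  obtain J where J: "J 0 = 0" "\<And>n. J n \<le> J (Suc n)"
    "\<And>n. s (J n) + \<tau> \<le> s (J (Suc n))" "\<And>n. s (J (Suc n)) \<le> s (J n) + \<tau> + 1"
    by (rule window_sequence) blast
  obtain n where n: "s (J n) \<le> t" "t < s (J (Suc n))" "t \<le> (real n + 1) * (\<tau> + 1)"
    using window_index[OF J(1,3,4) t] by blast
  have halving: "norm (x (s (J n))) \<le> (1 / 2) ^ n * norm x0" for n
  proof (induction n)
    case 0
    then show ?case using sd_sol_initial[OF x] sampling_seqD(1)[OF sampling] J(1) by simp
  next
    case (Suc n)
    have "norm (x (s (J (Suc n)))) \<le> norm (x (s (J n))) / 2"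
      by (rule window_halving(2)[OF x \<sigma> J(2,3,4)])
    then show ?case using Suc by simp
  qed
  have "norm (x t) \<le> 2 * M * norm (x (s (J n)))"
    using window_halving(1)[OF x \<sigma> J(2)[of n] J(3)[of n] J(4)[of n], of t] n by simp
  also have "\<dots> \<le> 2 * M * ((1 / 2) ^ n * norm x0)" using halving M by (intro mult_left_mono) auto
  also have "\<dots> \<le> 2 * M * (2 * exp (- (ln 2 / (\<tau> + 1)) * t) * norm x0)"
    using half_power_le_exp[of "\<tau> + 1" t n] n(3) \<tau> M by (intro mult_left_mono mult_right_mono) auto
  finally show ?thesis by (simp add: mult_ac)
qed

lemma UGES_phiS: "UGES (phiS T f K s)"
  unfolding UGES_def
proof (rule exI[of _ "4 * M"], rule exI[of _ "ln 2 / (\<tau> + 1)"], intro conjI allI impI ballI)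
  show "4 * M > 0" "ln 2 / (\<tau> + 1) > 0" using M \<tau> by auto
  fix t :: real and x0 :: 'x and \<sigma> :: "real \<Rightarrow> 'q" assume "0 \<le> t" "\<sigma> \<in> PC"
  obtain x where x: "sd_sol T f K s x0 \<sigma> x" using sd_sol_exists[OF sampling \<open>\<sigma> \<in> PC\<close>] by blast
  show "norm (phiS T f K s t x0 \<sigma>) \<le> 4 * M * exp (- (ln 2 / (\<tau> + 1)) * t) * norm x0"
    using phiS_eq[OF x sampling \<open>\<sigma> \<in> PC\<close> \<open>0 \<le> t\<close>] sd_sol_decay[OF x \<open>\<sigma> \<in> PC\<close> \<open>0 \<le> t\<close>] by simp
qed

end

lemma exists_quarter_time:
  fixes M lam :: real
  assumes M: "M > 0" and lam: "lam > 0"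
  shows "\<exists>\<tau>\<ge>1. M * exp (- lam * \<tau>) \<le> 1 / 4"
proof (intro exI conjI)
  define \<tau> where "\<tau> = max 1 (ln (4 * M) / lam)"
  show "\<tau> \<ge> 1" by (simp add: \<tau>_def)
  have "ln (4 * M) / lam \<le> \<tau>" by (simp add: \<tau>_def)
  then have "ln (4 * M) \<le> lam * \<tau>" using lam by (simp add: divide_le_eq mult.commute)
  then have "exp (- lam * \<tau>) \<le> exp (- ln (4 * M))" by simp
  also have "\<dots> = 1 / (4 * M)" using M by (simp add: exp_minus inverse_eq_divide)
  finally show "M * exp (- lam * \<tau>) \<le> 1 / 4" using M by (simp add: field_simps)
qed

lemma exists_small_sampling_bound:
  fixes \<Gamma> D M :: real
  assumes "\<Gamma> \<ge> 0" "D \<ge> 0" "M > 0"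
  obtains \<delta>s where "\<delta>s > 0"
    and "\<And>\<delta>. 0 \<le> \<delta> \<Longrightarrow> \<delta> < \<delta>s \<Longrightarrow> \<delta> \<le> 1 \<and> \<Gamma> * (D * \<delta>) \<le> 1 / 2 \<and> 8 * \<Gamma> * (D * \<delta>) * M \<le> 1"
proof
  define Q where "Q = 1 + 2 * \<Gamma> * D + 8 * \<Gamma> * D * M"
  have Q: "Q \<ge> 1" "2 * \<Gamma> * D \<le> Q" "8 * \<Gamma> * D * M \<le> Q" using assms by (auto simp: Q_def)
  show "1 / Q > 0" using Q by simp
  fix \<delta> :: real assume "0 \<le> \<delta>" "\<delta> < 1 / Q"
  then have "\<delta> * Q \<le> 1" using Q by (simp add: less_divide_eq)
  moreover have "\<delta> * 1 \<le> \<delta> * Q" "\<delta> * (2 * \<Gamma> * D) \<le> \<delta> * Q" "\<delta> * (8 * \<Gamma> * D * M) \<le> \<delta> * Q"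
    using mult_left_mono[OF Q(1) \<open>0 \<le> \<delta>\<close>] mult_left_mono[OF Q(2) \<open>0 \<le> \<delta>\<close>]
      mult_left_mono[OF Q(3) \<open>0 \<le> \<delta>\<close>] by simp_all
  ultimately show "\<delta> \<le> 1 \<and> \<Gamma> * (D * \<delta>) \<le> 1 / 2 \<and> 8 * \<Gamma> * (D * \<delta>) * M \<le> 1"
    by (auto simp: algebra_simps)
qed

lemma (in closed_loop_system) UGES_phiS_if_fast_sampling:
  assumes "UGES (phi0 T f K)"
  obtains \<delta>s where "\<delta>s > 0"
    and "\<And>s \<delta>. sampling_seq s \<Longrightarrow> (\<And>k. s (Suc k) - s k \<le> \<delta>) \<Longrightarrow> \<delta> < \<delta>s \<Longrightarrow> UGES (phiS T f K s)"
proof -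
  obtain M lam where M: "M > 0" "lam > 0"
    and decay: "\<forall>t\<ge>0. \<forall>x. \<forall>\<sigma>\<in>PC. norm (phi0 T f K t x \<sigma>) \<le> M * exp (- lam * t) * norm x"
    using assms unfolding UGES_def by blast
  obtain \<tau> where \<tau>: "\<tau> \<ge> 1" "M * exp (- lam * \<tau>) \<le> 1 / 4" using exists_quarter_time[OF M] by blast
  obtain C where C: "C \<ge> 1" "\<forall>t\<in>{0..\<tau> + 1}. \<forall>v. norm (T t v) \<le> C * norm v"
    using T_bounded_on_interval by blast
  define \<Gamma> where "\<Gamma> = C * Lf * (\<tau> + 1) * exp (C * Lf * (1 + LK) * (\<tau> + 1))"
  define D where "D = LK * C * Lf * (1 + LK * C)"
  obtain \<delta>s where "\<delta>s > 0" and small: "\<And>\<delta>. 0 \<le> \<delta> \<Longrightarrow> \<delta> < \<delta>s \<Longrightarrow>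
      \<delta> \<le> 1 \<and> \<Gamma> * (D * \<delta>) \<le> 1 / 2 \<and> 8 * \<Gamma> * (D * \<delta>) * M \<le> 1"
    using exists_small_sampling_bound[of \<Gamma> D M] C \<tau> Lf LK_nonneg M by (auto simp: \<Gamma>_def D_def)
  show ?thesis
  proof (rule that[OF \<open>\<delta>s > 0\<close>])
    fix s \<delta> assume s: "sampling_seq s" and gaps: "\<And>k. s (Suc k) - s k \<le> \<delta>" and "\<delta> < \<delta>s"
    have "0 \<le> \<delta>" using gaps[of 0] sampling_seqD(4)[OF s, of 0] by simp
    then interpret sampled_data_stability T f K Lf LK s M lam \<tau> C \<delta> \<Gamma> "D * \<delta>"
      using s M \<tau> C decay gaps small[of \<delta>] \<open>\<delta> < \<delta>s\<close>
      by unfold_locales (auto simp: \<Gamma>_def D_def)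
    show "UGES (phiS T f K s)" by (rule UGES_phiS)
  qed
qed

theorem corollary2:
  fixes T :: "real \<Rightarrow> 'x::banach \<Rightarrow> 'x"
    and f :: "'q \<Rightarrow> 'x \<times> 'u::banach \<Rightarrow> 'x"
    and K :: "'x \<Rightarrow> 'u"
    and Lf :: real
  assumes "C0_group T"
    and "Lf > 0"
    and "\<And>q. Lf-lipschitz_on UNIV (f q)"
    and "\<And>q. f q (0, 0) = 0"
    and "\<exists>LK. LK-lipschitz_on UNIV K"
    and "K 0 = 0"
    and "UGES (phi0 T f K)"
  shows "\<exists>\<delta>s>0. \<forall>s. sampling_seq s \<and> bdd_above (range (\<lambda>k. s (Suc k) - s k)) \<and>
            (SUP k. s (Suc k) - s k) < \<delta>s \<longrightarrow> UGES (phiS T f K s)"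
proof -
  obtain LK where "LK-lipschitz_on UNIV K" using assms(5) by blast
  then interpret closed_loop_system T f K Lf LK using assms by unfold_locales auto
  obtain \<delta>s where "\<delta>s > 0" and fast: "\<And>s \<delta>. sampling_seq s \<Longrightarrow> (\<And>k. s (Suc k) - s k \<le> \<delta>) \<Longrightarrow>
      \<delta> < \<delta>s \<Longrightarrow> UGES (phiS T f K s)"
    using UGES_phiS_if_fast_sampling[OF assms(7)] by blast
  show ?thesis
  proof (intro exI[of _ \<delta>s] conjI allI impI \<open>\<delta>s > 0\<close>)
    fix s :: "nat \<Rightarrow> real"
    assume s: "sampling_seq s \<and> bdd_above (range (\<lambda>k. s (Suc k) - s k)) \<and> (SUP k. s (Suc k) - s k) < \<delta>s"
    then have "s (Suc k) - s k \<le> (SUP k. s (Suc k) - s k)" for k by (intro cSUP_upper) auto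
    then show "UGES (phiS T f K s)" using fast s by blast
  qed
qed

end
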